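(* Let $(X,d)$, $(\Lambda,d_\Lambda)$ be compact metric spaces, $\tau:\Lambda\times X\to X$ continuous and $q:X\to\mathcal P(\Lambda)$ continuous. Assume: (W1) each $\tau_\lambda$ is $1$-Lipschitz on $X$; (MP1) there are $s>0$ and an integer $M\ge1$ such that $\int_{\Lambda^M}|f(\tau_{\lambda^M}(x))-f(\tau_{\lambda^M}(y))|\,dP^q_{M,x}(\lambda^M)\le s\,d(x,y)$ for all $x,y\in X$ and all $f\in\mathrm{Lip}_1(X)$; (H2) there is $r\ge0$ with $d(\tau(\lambda_1,x),\tau(\lambda_2,x))\le r\,d_\Lambda(\lambda_1,\lambda_2)$ for all $\lambda_1,\lambda_2$, $x$; (H3) there is $t\ge0$ with $d_{MK}(q_x,q_y)\le t\,d(x,y)$ for all $x,y\in X$; and suppose $s+r\,M\,t<1$. Then there is a unique $\mu_{\mathcal R}\in\mathcal P(X)$ with $T_q(\mu_{\mathcal R})=\mu_{\mathcal R}$, and for every $\mu_0\in\mathcal P(X)$, $T_q^k(\mu_0)\to\mu_{\mathcal R}$ exponentially fast in the Monge–Kantorovich distance.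
   Context: $\mathcal{P}(Y)$ is the set of Borel probability measures on a compact metric space $Y$, with $d_{MK}(\mu,\nu)=\sup_{f\in \mathrm{Lip}_1(Y)}\{\int f\,d\mu-\int f\,d\nu\}$, $\mathrm{Lip}_1(Y)$ the real $1$-Lipschitz functions on $Y$. $\tau_\lambda(x)=\tau(\lambda,x)$; for $\lambda^j=(\lambda_0,\dots,\lambda_{j-1})$, $\tau_{\lambda^j}=\tau_{\lambda_{j-1}}\circ\cdots\circ\tau_{\lambda_0}$. $P^q_{M,x}\in\mathcal P(\Lambda^M)$ is given by $dP^q_{M,x}(\lambda_0,\dots,\lambda_{M-1})=dq_{\tau_{\lambda^{M-1}}(x)}(\lambda_{M-1})\cdots dq_{\tau_{\lambda^1}(x)}(\lambda_1)\,dq_x(\lambda_0)$. The Markov operator $T_q$ on $\mathcal P(X)$ is defined by $\int_X f\,dT_q(\mu)=\int_X\int_\Lambda f(\tau(\lambda,x))\,dq_x(\lambda)\,d\mu(x)$ for $f\in C(X)$. *)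

theory Defs
  imports "HOL-Probability.Probability"
begin

definition prob_measures :: "'b::topological_space measure set" where
  "prob_measures = {\<mu>. prob_space \<mu> \<and> sets \<mu> = sets borel}"

definition Lip1 :: "('b::metric_space \<Rightarrow> real) set" where
  "Lip1 = {f. \<forall>x y. \<bar>f x - f y\<bar> \<le> dist x y}"

definition dMK :: "'b::metric_space measure \<Rightarrow> 'b measure \<Rightarrow> real" where
  "dMK \<mu> \<nu> = (SUP f\<in>Lip1. (\<integral>y. f y \<partial>\<mu>) - (\<integral>y. f y \<partial>\<nu>))"

text \<open>tau_{lambda^j} for a list [lambda_0, ..., lambda_{j-1}]:
  tau_{lambda_{j-1}} o ... o tau_{lambda_0}.\<close>
definition tau_seq :: "('l \<Rightarrow> 'a \<Rightarrow> 'a) \<Rightarrow> 'l list \<Rightarrow> 'a \<Rightarrow> 'a" where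
  "tau_seq \<tau> ls x = foldl (\<lambda>y l. \<tau> l y) x ls"

text \<open>Integral of a nonnegative function g on Lambda^M (words [lambda_0,...,lambda_{M-1}])
  with respect to P^q_{M,x}, given by its defining iterated integral
  dq_{tau_{lambda^{M-1}}(x)}(lambda_{M-1}) ... dq_{tau_{lambda^1}(x)}(lambda_1) dq_x(lambda_0).\<close>
fun P_int :: "('l \<Rightarrow> 'a \<Rightarrow> 'a) \<Rightarrow> ('a \<Rightarrow> 'l measure) \<Rightarrow> nat \<Rightarrow> 'a
               \<Rightarrow> ('l list \<Rightarrow> ennreal) \<Rightarrow> ennreal" where
  "P_int \<tau> q 0 x g = g []"
| "P_int \<tau> q (Suc n) x g = (\<integral>\<^sup>+ l. P_int \<tau> q n (\<tau> l x) (\<lambda>ls. g (l # ls)) \<partial>(q x))"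

definition Tq :: "('l::topological_space \<Rightarrow> 'a::topological_space \<Rightarrow> 'a) \<Rightarrow> ('a \<Rightarrow> 'l measure)
                   \<Rightarrow> 'a measure \<Rightarrow> 'a measure" where
  "Tq \<tau> q \<mu> = \<mu> \<bind> (\<lambda>x. distr (q x) borel (\<lambda>l. \<tau> l x))"

end

(*
  The dual of T_q, U f (x) = \<integral> f (\<tau>(\<lambda>, x)) dq_x(\<lambda>), maps L-Lipschitz functions to
  L (1 + r t)-Lipschitz ones. To compare U^M f at x and y, run the chain from x and apply the
  same parameters to y: by (MP1) this synchronous coupling costs at most s L d(x, y), and
  replacing, one step at a time, the parameter law at the x-trajectory by the one at the
  y-trajectory costs r t Lip(U^j f) d(x, y) per step. Hence the Lipschitz constant of U^n f
  decays like (s + r M t)^(n div M), and U^n f converges uniformly and geometrically fast to a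
  constant \<Phi>(f). The functional \<Phi> is positive, linear and normalised on Lipschitz
  functions, so it is integration against a Borel probability measure \<mu>_R; invariance,
  uniqueness and the exponential rate in d_MK all follow from
  \<integral> f d(T_q^k \<mu>) = \<integral> U^k f d\<mu>.
*)

theory Submission
  imports Defs
begin

lemma lipschitz_on_UNIV_real_iff:
  fixes f :: "'a::metric_space \<Rightarrow> real"
  shows "C-lipschitz_on UNIV f \<longleftrightarrow> 0 \<le> C \<and> (\<forall>x y. \<bar>f x - f y\<bar> \<le> C * dist x y)"
  by (auto simp: lipschitz_on_def dist_real_def)

lemma Lip1_iff_lipschitz_on: "f \<in> Lip1 \<longleftrightarrow> 1-lipschitz_on UNIV f"
  by (simp add: Lip1_def lipschitz_on_UNIV_real_iff)

lemma lipschitz_on_UNIV_borel_measurable: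
  "C-lipschitz_on UNIV f \<Longrightarrow> f \<in> borel_measurable borel"
  by (intro borel_measurable_continuous_onI lipschitz_on_continuous_on)

definition lipschitz :: "('a::metric_space \<Rightarrow> 'b::metric_space) \<Rightarrow> bool" where
  "lipschitz f \<longleftrightarrow> (\<exists>C. C-lipschitz_on UNIV f)"

lemma lipschitzI: "C-lipschitz_on UNIV f \<Longrightarrow> lipschitz f"
  unfolding lipschitz_def by blast

lemma lipschitzE:
  assumes "lipschitz f"
  obtains C where "0 < C" "C-lipschitz_on UNIV f"
proof -
  obtain C where "C-lipschitz_on UNIV f" using assms unfolding lipschitz_def by blast
  then have "(C + 1)-lipschitz_on UNIV f" "0 < C + 1"
    using lipschitz_on_le lipschitz_on_nonneg by fastforce+
  then show thesis using that by blast
qed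

lemma lipschitz_const [simp]: "lipschitz (\<lambda>x. c)"
  using lipschitzI[OF lipschitz_on_constant] .

lemma lipschitz_add:
  fixes f g :: "'a::metric_space \<Rightarrow> 'b::real_normed_vector"
  shows "lipschitz f \<Longrightarrow> lipschitz g \<Longrightarrow> lipschitz (\<lambda>x. f x + g x)"
  unfolding lipschitz_def by (blast intro: lipschitz_on_add)

lemma lipschitz_cmult:
  fixes f :: "'a::metric_space \<Rightarrow> real"
  shows "lipschitz f \<Longrightarrow> lipschitz (\<lambda>x. c * f x)"
  unfolding lipschitz_def by (blast intro: lipschitz_on_cmult_real)

lemma lipschitz_sum:
  fixes f :: "'i \<Rightarrow> 'a::metric_space \<Rightarrow> 'b::real_normed_vector"
  shows "(\<And>i. i \<in> I \<Longrightarrow> lipschitz (f i)) \<Longrightarrow> lipschitz (\<lambda>x. \<Sum>i\<in>I. f i x)"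
proof (induction I rule: infinite_finite_induct)
  case (insert i I)
  then show ?case by (simp add: lipschitz_add)
qed simp_all

lemma lipschitz_bounded:
  fixes f :: "'a::metric_space \<Rightarrow> real"
  assumes "compact (UNIV :: 'a set)" "lipschitz f"
  obtains B where "\<And>x. \<bar>f x\<bar> \<le> B"
proof -
  obtain C where "C-lipschitz_on UNIV f" using assms(2) unfolding lipschitz_def by blast
  then have "compact (range f)"
    by (intro compact_continuous_image lipschitz_on_continuous_on assms(1))
  then have "bounded (range f)" by (rule compact_imp_bounded)
  then obtain B where "\<forall>y\<in>range f. \<bar>y\<bar> \<le> B" unfolding bounded_real by blast
  then show thesis using that by blast
qed

lemma lipschitz_mult:
  fixes f g :: "'a::metric_space \<Rightarrow> real"
  assumes "compact (UNIV :: 'a set)" "lipschitz f" "lipschitz g"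
  shows "lipschitz (\<lambda>x. f x * g x)"
proof -
  obtain C D where C: "C-lipschitz_on UNIV f" and D: "D-lipschitz_on UNIV g"
    using assms(2,3) unfolding lipschitz_def by blast
  obtain A B where A: "\<And>x. \<bar>f x\<bar> \<le> A" and B: "\<And>x. \<bar>g x\<bar> \<le> B"
    using lipschitz_bounded[OF assms(1)] assms(2,3) by metis
  have "0 \<le> A" "0 \<le> B" using A[of undefined] B[of undefined] by (meson abs_ge_zero order_trans)+
  have "(A * D + B * C)-lipschitz_on UNIV (\<lambda>x. f x * g x)"
    unfolding lipschitz_on_UNIV_real_iff
  proof (intro conjI allI)
    show "0 \<le> A * D + B * C" using \<open>0 \<le> A\<close> \<open>0 \<le> B\<close>
      using C D lipschitz_on_nonneg by (metis add_nonneg_nonneg mult_nonneg_nonneg)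
    fix x y
    have "f x * g x - f y * g y = f x * (g x - g y) + g y * (f x - f y)"
      by (simp add: algebra_simps)
    then have "\<bar>f x * g x - f y * g y\<bar> \<le> \<bar>f x\<bar> * \<bar>g x - g y\<bar> + \<bar>g y\<bar> * \<bar>f x - f y\<bar>"
      unfolding abs_mult[symmetric] by (metis abs_triangle_ineq)
    also have "\<dots> \<le> A * (D * dist x y) + B * (C * dist x y)"
      using C D A B \<open>0 \<le> A\<close> \<open>0 \<le> B\<close> unfolding lipschitz_on_UNIV_real_iff
      by (intro add_mono mult_mono) auto
    finally show "\<bar>f x * g x - f y * g y\<bar> \<le> (A * D + B * C) * dist x y"
      by (simp add: algebra_simps)
  qed
  then show ?thesis by (rule lipschitzI)
qed

lemma lipschitz_divide:
  fixes f g :: "'a::metric_space \<Rightarrow> real"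
  assumes "compact (UNIV :: 'a set)" "lipschitz f" "lipschitz g" "0 < e" "\<And>x. e \<le> g x"
  shows "lipschitz (\<lambda>x. f x / g x)"
proof -
  obtain D where D: "D-lipschitz_on UNIV g" using assms(3) unfolding lipschitz_def by blast
  have "(D / e\<^sup>2)-lipschitz_on UNIV (\<lambda>x. 1 / g x)"
    unfolding lipschitz_on_UNIV_real_iff
  proof (intro conjI allI)
    show "0 \<le> D / e\<^sup>2" using lipschitz_on_nonneg[OF D] by simp
    fix x y
    have pos: "0 < g x" "0 < g y" using assms(4,5) less_le_trans by blast+
    have "1 / g x - 1 / g y = (g y - g x) / (g x * g y)"
      using pos by (simp add: field_simps)
    then have "\<bar>1 / g x - 1 / g y\<bar> = \<bar>g y - g x\<bar> / (g x * g y)"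
      using pos by (simp add: abs_mult)
    also have "\<dots> \<le> \<bar>g y - g x\<bar> / e\<^sup>2"
    proof (rule divide_left_mono)
      show "e\<^sup>2 \<le> g x * g y"
        unfolding power2_eq_square using assms(4,5) pos
        by (intro mult_mono) (auto simp: less_imp_le)
    qed (use pos assms(4) in auto)
    also have "\<dots> \<le> D * dist x y / e\<^sup>2"
      using D unfolding lipschitz_on_UNIV_real_iff by (intro divide_right_mono)
        (auto simp: abs_minus_commute)
    finally show "\<bar>1 / g x - 1 / g y\<bar> \<le> D / e\<^sup>2 * dist x y" by simp
  qed
  then have "lipschitz (\<lambda>x. f x * (1 / g x))"
    by (intro lipschitz_mult assms(1,2) lipschitzI)
  then show ?thesis by simp
qed

lemma lipschitz_on_dist_cutoff: "1-lipschitz_on UNIV (\<lambda>x. max 0 (c - dist x y))"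
  unfolding lipschitz_on_UNIV_real_iff
proof (intro conjI allI)
  fix x x'
  have "\<bar>dist x y - dist x' y\<bar> \<le> dist x x'"
    using abs_dist_diff_le[of x y x'] by (simp add: dist_commute)
  then show "\<bar>max 0 (c - dist x y) - max 0 (c - dist x' y)\<bar> \<le> 1 * dist x x'"
    by linarith
qed simp

lemma divide_lipschitz_in_Lip1:
  fixes f :: "'a::metric_space \<Rightarrow> real"
  assumes "0 < C" "C-lipschitz_on UNIV f"
  shows "(\<lambda>x. f x / C) \<in> Lip1"
  using assms unfolding Lip1_def lipschitz_on_UNIV_real_iff
  by (auto simp: diff_divide_distrib[symmetric] pos_divide_le_eq mult.commute)

lemma prob_measuresD:
  assumes "\<mu> \<in> prob_measures"
  shows "prob_space \<mu>" "sets \<mu> = sets borel" "space \<mu> = UNIV"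
  using assms unfolding prob_measures_def by (auto dest: sets_eq_imp_space_eq)

lemma prob_measures_measurable:
  "\<mu> \<in> prob_measures \<Longrightarrow> f \<in> borel_measurable borel \<Longrightarrow> f \<in> borel_measurable \<mu>"
  using measurable_cong_sets[OF prob_measuresD(2) refl] by blast

lemma integrable_lipschitz:
  fixes f :: "'a::metric_space \<Rightarrow> real"
  assumes "compact (UNIV :: 'a set)" "\<mu> \<in> prob_measures" "lipschitz f"
  shows "integrable \<mu> f"
proof -
  interpret prob_space \<mu> using prob_measuresD(1)[OF assms(2)] .
  obtain B where "\<And>x. \<bar>f x\<bar> \<le> B" using lipschitz_bounded[OF assms(1,3)] by blast
  moreover have "f \<in> borel_measurable \<mu>"
    using assms(2,3) lipschitz_on_UNIV_borel_measurable prob_measures_measurable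
    unfolding lipschitz_def by blast
  ultimately show ?thesis by (intro integrable_const_bound[where B=B]) auto
qed

lemma (in prob_space) abs_integral_diff_const_le:
  fixes f :: "'a \<Rightarrow> real"
  assumes "integrable M f" "\<And>x. x \<in> space M \<Longrightarrow> \<bar>f x - c\<bar> \<le> e"
  shows "\<bar>integral\<^sup>L M f - c\<bar> \<le> e"
proof -
  have "c - e \<le> f x \<and> f x \<le> c + e" if "x \<in> space M" for x
    using assms(2)[OF that] by (auto simp: abs_le_iff)
  then have "c - e \<le> integral\<^sup>L M f" "integral\<^sup>L M f \<le> c + e"
    using assms(1) by (auto intro!: integral_ge_const integral_le_const)
  then show ?thesis by (simp add: abs_le_iff)
qed

lemma abs_integral_minus_le_diameter:
  fixes f :: "'a::metric_space \<Rightarrow> real"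
  assumes "compact (UNIV :: 'a set)" "\<mu> \<in> prob_measures" "1-lipschitz_on UNIV f"
  shows "\<bar>(\<integral>y. f y \<partial>\<mu>) - f x\<bar> \<le> diameter (UNIV :: 'a set)"
proof -
  interpret prob_space \<mu> using prob_measuresD(1)[OF assms(2)] .
  have "\<bar>f y - f x\<bar> \<le> diameter (UNIV :: 'a set)" for y
    using assms(3) diameter_bounded_bound[OF compact_imp_bounded[OF assms(1)] UNIV_I UNIV_I]
    unfolding lipschitz_on_UNIV_real_iff by (metis mult_1 order_trans)
  then show ?thesis
    by (intro abs_integral_diff_const_le integrable_lipschitz assms lipschitzI[OF assms(3)]) auto
qed

lemma dMK_bdd_above:
  assumes "compact (UNIV :: 'a::metric_space set)" "\<mu> \<in> prob_measures" "\<nu> \<in> prob_measures"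
  shows "bdd_above ((\<lambda>f. (\<integral>y. f y \<partial>\<mu>) - (\<integral>y. f y \<partial>(\<nu> :: 'a measure))) ` Lip1)"
proof (rule bdd_aboveI2)
  fix f :: "'a \<Rightarrow> real" assume "f \<in> Lip1"
  then have "1-lipschitz_on UNIV f" by (simp add: Lip1_iff_lipschitz_on)
  then show "(\<integral>y. f y \<partial>\<mu>) - (\<integral>y. f y \<partial>\<nu>) \<le> 2 * diameter (UNIV :: 'a set)"
    using abs_integral_minus_le_diameter[OF assms(1,2), of f undefined]
      abs_integral_minus_le_diameter[OF assms(1,3), of f undefined]
    by (simp add: abs_le_iff)
qed

lemma integral_diff_le_dMK:
  fixes f :: "'a::metric_space \<Rightarrow> real"
  assumes "compact (UNIV :: 'a set)" "\<mu> \<in> prob_measures" "\<nu> \<in> prob_measures"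
    and "C-lipschitz_on UNIV f"
  shows "(\<integral>y. f y \<partial>\<mu>) - (\<integral>y. f y \<partial>\<nu>) \<le> C * dMK \<mu> \<nu>"
proof (cases "C = 0")
  case True
  have "\<bar>(\<integral>y. f y \<partial>\<rho>) - f undefined\<bar> \<le> 0" if "\<rho> \<in> prob_measures" for \<rho>
  proof -
    interpret prob_space \<rho> using prob_measuresD(1)[OF that] .
    show ?thesis
      using assms(4) True unfolding lipschitz_on_UNIV_real_iff
      by (intro abs_integral_diff_const_le integrable_lipschitz assms(1) that
          lipschitzI[OF assms(4)]) auto
  qed
  then show ?thesis using True assms(2,3) by fastforce
next
  case False
  then have C: "0 < C" using lipschitz_on_nonneg[OF assms(4)] by simp
  have "(\<lambda>y. f y / C) \<in> Lip1" by (rule divide_lipschitz_in_Lip1[OF C assms(4)])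
  then have "(\<integral>y. f y / C \<partial>\<mu>) - (\<integral>y. f y / C \<partial>\<nu>) \<le> dMK \<mu> \<nu>"
    unfolding dMK_def by (rule cSUP_upper[OF _ dMK_bdd_above[OF assms(1-3)]])
  then show ?thesis
    using C by (simp add: diff_divide_distrib[symmetric] pos_divide_le_eq mult.commute)
qed

lemma dMK_leI:
  assumes "\<And>f. 1-lipschitz_on UNIV f \<Longrightarrow> (\<integral>y. f y \<partial>\<mu>) - (\<integral>y. f y \<partial>\<nu>) \<le> c"
  shows "dMK \<mu> (\<nu> :: 'a::metric_space measure) \<le> c"
  unfolding dMK_def
proof (rule cSUP_least)
  have "(\<lambda>_. 0) \<in> Lip1" by (simp add: Lip1_def)
  then show "Lip1 \<noteq> {}" by blast
qed (use assms in \<open>simp add: Lip1_iff_lipschitz_on\<close>)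

definition open_cutoff :: "'a::metric_space set \<Rightarrow> nat \<Rightarrow> 'a \<Rightarrow> real" where
  "open_cutoff A n y = min 1 (real n * infdist y (- A))"

lemma lipschitz_on_open_cutoff: "(real n)-lipschitz_on UNIV (open_cutoff A n)"
  unfolding lipschitz_on_UNIV_real_iff
proof (intro conjI allI)
  fix x y
  have "\<bar>real n * infdist x (- A) - real n * infdist y (- A)\<bar> \<le> real n * dist x y"
    using infdist_triangle_abs[of x "- A" y]
    by (simp add: abs_mult right_diff_distrib[symmetric] mult_left_mono)
  then show "\<bar>open_cutoff A n x - open_cutoff A n y\<bar> \<le> real n * dist x y"
    unfolding open_cutoff_def by linarith
qed simp

lemma open_cutoff_bounds: "0 \<le> open_cutoff A n y" "open_cutoff A n y \<le> 1"
  by (simp_all add: open_cutoff_def infdist_nonneg)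

lemma incseq_open_cutoff: "incseq (\<lambda>n y. ennreal (open_cutoff A n y))"
proof (intro monoI le_funI ennreal_leI)
  fix m n :: nat and y assume "m \<le> n"
  then have "real m * infdist y (- A) \<le> real n * infdist y (- A)"
    by (intro mult_right_mono) (simp_all add: infdist_nonneg)
  then show "open_cutoff A m y \<le> open_cutoff A n y"
    unfolding open_cutoff_def by linarith
qed

lemma SUP_open_cutoff:
  assumes "open A" "A \<noteq> UNIV"
  shows "(SUP n. ennreal (open_cutoff A n y)) = indicator A y"
proof (cases "y \<in> A")
  case True
  then have "0 < infdist y (- A)"
    using assms by (intro infdist_pos_not_in_closed) auto
  then obtain n :: nat where "1 / infdist y (- A) < real n" using reals_Archimedean2 by blast
  then have "open_cutoff A n y = 1"
    using \<open>0 < infdist y (- A)\<close> unfolding open_cutoff_def by (simp add: field_simps)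
  then have "1 \<le> (SUP n. ennreal (open_cutoff A n y))" by (metis SUP_upper UNIV_I ennreal_1)
  moreover have "(SUP n. ennreal (open_cutoff A n y)) \<le> 1"
    by (intro SUP_least) (simp add: open_cutoff_bounds)
  ultimately show ?thesis using True by simp
qed (simp add: open_cutoff_def)

lemma emeasure_open_eq_SUP_open_cutoff:
  assumes "\<mu> \<in> prob_measures" "open A" "A \<noteq> UNIV"
  shows "emeasure \<mu> A = (SUP n. ennreal (\<integral>y. open_cutoff A n y \<partial>\<mu>))"
proof -
  interpret prob_space \<mu> using prob_measuresD(1)[OF assms(1)] .
  have meas: "open_cutoff A n \<in> borel_measurable \<mu>" for n
    by (rule prob_measures_measurable[OF assms(1)
          lipschitz_on_UNIV_borel_measurable[OF lipschitz_on_open_cutoff]])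
  have "A \<in> sets \<mu>"
    unfolding prob_measuresD(2)[OF assms(1)] using assms(2) by simp
  then have "emeasure \<mu> A = (\<integral>\<^sup>+y. indicator A y \<partial>\<mu>)"
    by (simp add: nn_integral_indicator)
  also have "\<dots> = (\<integral>\<^sup>+y. (SUP n. ennreal (open_cutoff A n y)) \<partial>\<mu>)"
    using SUP_open_cutoff[OF assms(2,3)] by simp
  also have "\<dots> = (SUP n. (\<integral>\<^sup>+y. ennreal (open_cutoff A n y) \<partial>\<mu>))"
    using meas by (intro nn_integral_monotone_convergence_SUP[OF incseq_open_cutoff]) simp
  also have "\<dots> = (SUP n. ennreal (\<integral>y. open_cutoff A n y \<partial>\<mu>))"
  proof -
    have "integrable \<mu> (open_cutoff A n)" for n
      using meas by (intro integrable_const_bound[where B=1] AE_I2)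
        (simp_all add: abs_of_nonneg open_cutoff_bounds)
    then show ?thesis by (simp add: nn_integral_eq_integral open_cutoff_bounds)
  qed
  finally show ?thesis .
qed

lemma prob_measures_eqI_lipschitz:
  assumes "\<mu> \<in> prob_measures" "\<nu> \<in> prob_measures"
    and "\<And>f :: 'a::metric_space \<Rightarrow> real. lipschitz f \<Longrightarrow> (\<integral>y. f y \<partial>\<mu>) = (\<integral>y. f y \<partial>\<nu>)"
  shows "\<mu> = \<nu>"
proof (rule measure_eqI_generator_eq[where E="{S. open S}" and \<Omega>=UNIV and A="\<lambda>_. UNIV"])
  show "Int_stable {S::'a set. open S}" by (auto simp: Int_stable_def)
  show "sets \<mu> = sigma_sets UNIV {S. open S}" "sets \<nu> = sigma_sets UNIV {S. open S}"
    using assms(1,2) prob_measuresD(2) by (simp_all add: sets_borel)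
  have univ: "emeasure \<rho> UNIV = 1" if "\<rho> \<in> prob_measures" for \<rho> :: "'a measure"
    using prob_space.emeasure_space_1[OF prob_measuresD(1)] prob_measuresD(3) that by metis
  then show "emeasure \<mu> UNIV \<noteq> \<infinity>" using assms(1) by simp
  have "(\<integral>y. open_cutoff A n y \<partial>\<mu>) = (\<integral>y. open_cutoff A n y \<partial>\<nu>)" for A n
    by (rule assms(3)[OF lipschitzI[OF lipschitz_on_open_cutoff]])
  moreover fix A assume "A \<in> {S::'a set. open S}"
  ultimately show "emeasure \<mu> A = emeasure \<nu> A"
    using univ[OF assms(1)] univ[OF assms(2)] assms(1,2)
    by (cases "A = UNIV") (simp_all add: emeasure_open_eq_SUP_open_cutoff)
qed auto

lemma compact_finite_net_list:
  assumes "compact (UNIV :: 'a::metric_space set)" "0 < e"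
  shows "\<exists>ys. ys \<noteq> [] \<and> (\<forall>x::'a. \<exists>i<length ys. dist x (ys ! i) < e)"
proof -
  obtain C where C: "finite C" "UNIV \<subseteq> (\<Union>y\<in>C. ball (y::'a) e)"
    using seq_compact_imp_totally_bounded[OF compact_imp_seq_compact[OF assms(1)]] assms(2)
    by blast
  obtain ys where ys: "set ys = C" using finite_list[OF C(1)] by blast
  have "\<exists>i<length ys. dist x (ys ! i) < e" for x
  proof -
    obtain y where "y \<in> C" "x \<in> ball y e" using C(2) by blast
    then obtain i where "i < length ys" "ys ! i = y" "dist y x < e"
      using ys by (auto simp: in_set_conv_nth)
    then show ?thesis by (auto simp: dist_commute)
  qed
  moreover from this[of undefined] have "ys \<noteq> []" by auto
  ultimately show ?thesis by blast
qed

definition mesh :: "nat \<Rightarrow> real" where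
  "mesh k = 1 / real (Suc k)"

lemma mesh_pos: "0 < mesh k"
  by (simp add: mesh_def)

lemma mesh_tendsto_0: "mesh \<longlonglongrightarrow> 0"
  unfolding mesh_def using LIMSEQ_Suc[OF lim_inverse_n'] by (simp add: inverse_eq_divide)

definition uniform01 :: "real measure" where
  "uniform01 = restrict_space lborel {0..<1}"

lemma space_uniform01: "space uniform01 = {0..<1}"
  by (simp add: uniform01_def space_restrict_space)

lemma sets_uniform01: "A \<in> sets uniform01 \<longleftrightarrow> A \<subseteq> {0..<1} \<and> A \<in> sets lborel"
  unfolding uniform01_def by (rule sets_restrict_space_iff) simp

lemma prob_space_uniform01: "prob_space uniform01"
  unfolding uniform01_def by (rule prob_space_restrict_space) simp_all

text \<open>The representing measure is built by hand: the products \<open>cell_fun w\<close> of partitions of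
  unity of finer and finer mesh form a tree, \<open>[0,1)\<close> is cut into nested intervals \<open>cell w\<close> of
  lengths \<open>\<Phi> (cell_fun w)\<close>, and Lebesgue measure is pushed forward along the limit of points
  chosen in the supports of the cells containing \<open>u\<close>.\<close>

locale positive_lipschitz_functional =
  fixes \<Phi> :: "('a::metric_space \<Rightarrow> real) \<Rightarrow> real"
  assumes compact_space: "compact (UNIV :: 'a set)"
    and \<Phi>_add: "\<And>f g. lipschitz f \<Longrightarrow> lipschitz g \<Longrightarrow> \<Phi> (\<lambda>x. f x + g x) = \<Phi> f + \<Phi> g"
    and \<Phi>_cmult: "\<And>f c. lipschitz f \<Longrightarrow> \<Phi> (\<lambda>x. c * f x) = c * \<Phi> f"
    and \<Phi>_mono: "\<And>f g. lipschitz f \<Longrightarrow> lipschitz g \<Longrightarrow> (\<And>x. f x \<le> g x) \<Longrightarrow> \<Phi> f \<le> \<Phi> g"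
    and \<Phi>_one: "\<Phi> (\<lambda>x. 1) = 1"
begin

lemma \<Phi>_const: "\<Phi> (\<lambda>x. c) = c"
  using \<Phi>_cmult[of "\<lambda>x. 1" c] \<Phi>_one by simp

lemma \<Phi>_add_const: "lipschitz f \<Longrightarrow> \<Phi> (\<lambda>x. f x + c) = \<Phi> f + c"
  using \<Phi>_add[of f "\<lambda>x. c"] \<Phi>_const by simp

lemma \<Phi>_sum:
  "finite I \<Longrightarrow> (\<And>i. i \<in> I \<Longrightarrow> lipschitz (f i)) \<Longrightarrow> \<Phi> (\<lambda>x. \<Sum>i\<in>I. f i x) = (\<Sum>i\<in>I. \<Phi> (f i))"
proof (induction I rule: finite_induct)
  case (insert i I)
  then show ?case by (simp add: \<Phi>_add lipschitz_sum)
qed (simp add: \<Phi>_const)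

definition net :: "nat \<Rightarrow> 'a list" where
  "net k = (SOME ys. ys \<noteq> [] \<and> (\<forall>x. \<exists>i<length ys. dist x (ys ! i) < mesh k))"

lemma net_nonempty: "net k \<noteq> []"
  and net_covers: "\<exists>i<length (net k). dist x (net k ! i) < mesh k"
  using someI_ex[OF compact_finite_net_list[OF compact_space mesh_pos]]
  unfolding net_def[symmetric] by auto

definition bump :: "nat \<Rightarrow> nat \<Rightarrow> 'a \<Rightarrow> real" where
  "bump k i x = max 0 (2 * mesh k - dist x (net k ! i))"

definition bump_sum :: "nat \<Rightarrow> 'a \<Rightarrow> real" where
  "bump_sum k x = (\<Sum>i<length (net k). bump k i x)"

definition pou :: "nat \<Rightarrow> nat \<Rightarrow> 'a \<Rightarrow> real" where
  "pou k i x = bump k i x / bump_sum k x"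

lemma bump_nonneg: "0 \<le> bump k i x"
  by (simp add: bump_def)

lemma bump_sum_ge_mesh: "mesh k \<le> bump_sum k x"
proof -
  obtain i where i: "i < length (net k)" "dist x (net k ! i) < mesh k"
    using net_covers by blast
  then have "mesh k \<le> bump k i x" by (simp add: bump_def)
  also have "\<dots> \<le> bump_sum k x"
    unfolding bump_sum_def using i(1) bump_nonneg by (intro member_le_sum) auto
  finally show ?thesis .
qed

lemma pou_nonneg: "0 \<le> pou k i x"
  using bump_nonneg bump_sum_ge_mesh[of k x] mesh_pos[of k] by (simp add: pou_def)

lemma sum_pou: "(\<Sum>i<length (net k). pou k i x) = 1"
  using bump_sum_ge_mesh[of k x] mesh_pos[of k]
  by (simp add: pou_def bump_sum_def sum_divide_distrib[symmetric])

lemma pou_pos_imp_dist: "0 < pou k i x \<Longrightarrow> dist x (net k ! i) < 2 * mesh k"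
  using bump_sum_ge_mesh[of k x] mesh_pos[of k]
  by (auto simp: pou_def bump_def zero_less_divide_iff max_def split: if_splits)

lemma lipschitz_pou: "lipschitz (pou k i)"
  unfolding pou_def[abs_def]
proof (rule lipschitz_divide[OF compact_space _ _ mesh_pos bump_sum_ge_mesh])
  show "lipschitz (bump k i)"
    unfolding bump_def[abs_def] by (rule lipschitzI[OF lipschitz_on_dist_cutoff])
  then show "lipschitz (bump_sum k)"
    unfolding bump_sum_def[abs_def] bump_def
    by (intro lipschitz_sum lipschitzI[OF lipschitz_on_dist_cutoff])
qed

primrec cell_fun :: "nat list \<Rightarrow> 'a \<Rightarrow> real" where
  "cell_fun [] x = 1"
| "cell_fun (i # w) x = pou (length w) i x * cell_fun w x"

primrec words :: "nat \<Rightarrow> nat list set" where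
  "words 0 = {[]}"
| "words (Suc k) = (\<lambda>(i, w). i # w) ` ({..<length (net k)} \<times> words k)"

lemma finite_words: "finite (words k)"
  by (induction k) auto

lemma length_words: "w \<in> words k \<Longrightarrow> length w = k"
  by (induction k arbitrary: w) auto

lemma Cons_in_words_iff: "i # w \<in> words (Suc k) \<longleftrightarrow> i < length (net k) \<and> w \<in> words k"
  by auto

lemma cell_fun_nonneg: "0 \<le> cell_fun w x"
  by (induction w) (simp_all add: pou_nonneg)

lemma lipschitz_cell_fun: "lipschitz (cell_fun w)"
proof (induction w)
  case (Cons i w)
  then have "lipschitz (\<lambda>x. pou (length w) i x * cell_fun w x)"
    by (intro lipschitz_mult compact_space lipschitz_pou)
  then show ?case by (simp add: fun_eq_iff)
qed (simp add: fun_eq_iff)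

lemma sum_cell_fun_children: "(\<Sum>i<length (net (length w)). cell_fun (i # w) x) = cell_fun w x"
  by (simp add: sum_distrib_right[symmetric] sum_pou)

lemma sum_cell_fun_words: "(\<Sum>w\<in>words k. cell_fun w x) = 1"
proof (induction k)
  case (Suc k)
  have "inj_on (\<lambda>(i, w). i # w) ({..<length (net k)} \<times> words k)"
    by (auto simp: inj_on_def)
  then have "(\<Sum>w\<in>words (Suc k). cell_fun w x)
      = (\<Sum>(i, w)\<in>{..<length (net k)} \<times> words k. pou k i x * cell_fun w x)"
    by (auto simp: sum.reindex length_words intro!: sum.cong)
  also have "\<dots> = (\<Sum>i<length (net k). pou k i x)"
    by (simp add: sum.cartesian_product[symmetric] sum_distrib_left[symmetric] Suc)
  finally show ?case by (simp add: sum_pou)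
qed simp

lemma cell_fun_Cons_pos_imp_dist:
  assumes "0 < cell_fun (i # w) x" "0 < cell_fun (i # w) y"
  shows "dist x y < 4 * mesh (length w)"
proof -
  have "0 < pou (length w) i z" if "0 < cell_fun (i # w) z" for z
    using that cell_fun_nonneg[of w z] pou_nonneg[of "length w" i z]
    by (auto simp: zero_less_mult_iff)
  then have "0 < pou (length w) i x" "0 < pou (length w) i y" using assms by blast+
  then have "dist x (net (length w) ! i) < 2 * mesh (length w)"
    "dist y (net (length w) ! i) < 2 * mesh (length w)"
    by (auto dest: pou_pos_imp_dist)
  then show ?thesis
    using dist_triangle3[of x y "net (length w) ! i"] by (simp add: dist_commute)
qed

definition mass :: "nat list \<Rightarrow> real" where
  "mass w = \<Phi> (cell_fun w)"

lemma mass_nonneg: "0 \<le> mass w"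
  unfolding mass_def
  using \<Phi>_mono[OF lipschitz_const lipschitz_cell_fun, of 0 w] cell_fun_nonneg \<Phi>_const by simp

lemma mass_Nil: "mass [] = 1"
proof -
  have "cell_fun [] = (\<lambda>x. 1)" by (simp add: fun_eq_iff)
  then show ?thesis by (simp add: mass_def \<Phi>_one)
qed

lemma sum_mass_children: "(\<Sum>i<length (net (length w)). mass (i # w)) = mass w"
  unfolding mass_def
  by (simp add: \<Phi>_sum[symmetric] lipschitz_cell_fun sum_cell_fun_children del: cell_fun.simps)

lemma mass_pos_imp_cell_fun_pos: "0 < mass w \<Longrightarrow> \<exists>x. 0 < cell_fun w x"
  using cell_fun_nonneg[of w] \<Phi>_const[of 0]
  by (metis mass_def less_irrefl antisym not_le ext)

primrec left_end :: "nat list \<Rightarrow> real" where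
  "left_end [] = 0"
| "left_end (i # w) = left_end w + (\<Sum>j<i. mass (j # w))"

definition cell :: "nat list \<Rightarrow> real set" where
  "cell w = {left_end w ..< left_end w + mass w}"

lemma cell_Nil: "cell [] = {0..<1}"
  by (simp add: cell_def mass_Nil)

lemma cell_Cons_subset:
  assumes "i < length (net (length w))"
  shows "cell (i # w) \<subseteq> cell w"
proof -
  have "(\<Sum>j<Suc i. mass (j # w)) \<le> (\<Sum>j<length (net (length w)). mass (j # w))"
    using assms by (intro sum_mono2) (auto simp: mass_nonneg)
  then show ?thesis
    using sum_mass_children[of w] sum_nonneg[of "{..<i}" "\<lambda>j. mass (j # w)"] mass_nonneg
    by (auto simp: cell_def)
qed

lemma cell_Cons_disjoint:
  assumes "i < j" "u \<in> cell (i # w)"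
  shows "u \<notin> cell (j # w)"
proof -
  have "(\<Sum>l<Suc i. mass (l # w)) \<le> (\<Sum>l<j. mass (l # w))"
    using assms(1) by (intro sum_mono2) (auto simp: mass_nonneg)
  then show ?thesis using assms(2) by (auto simp: cell_def)
qed

lemma cell_Cons_cover:
  assumes "u \<in> cell w"
  obtains i where "i < length (net (length w))" "u \<in> cell (i # w)"
proof -
  define n where "n = length (net (length w))"
  define S where "S i = (\<Sum>l<i. mass (l # w))" for i
  have "u - left_end w < S n"
    using assms sum_mass_children[of w] by (simp add: cell_def S_def n_def)
  then have ex: "\<exists>i. u - left_end w < S (Suc i)"
    using net_nonempty[of "length w"] by (metis Suc_pred length_greater_0_conv n_def)
  define i where "i = (LEAST i. u - left_end w < S (Suc i))"
  have upper: "u - left_end w < S (Suc i)"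
    unfolding i_def using ex by (rule LeastI_ex)
  have lower: "S i \<le> u - left_end w"
  proof (cases i)
    case 0
    then show ?thesis using assms by (simp add: S_def cell_def)
  next
    case (Suc j)
    then have "\<not> u - left_end w < S (Suc j)"
      using not_less_Least[of j "\<lambda>i. u - left_end w < S (Suc i)"] unfolding i_def by simp
    then show ?thesis using Suc by simp
  qed
  have "i < n"
  proof (rule ccontr)
    assume "\<not> i < n"
    then have "S n \<le> S i" unfolding S_def by (intro sum_mono2) (auto simp: mass_nonneg)
    then show False using lower \<open>u - left_end w < S n\<close> by simp
  qed
  moreover have "u \<in> cell (i # w)"
    using upper lower by (simp add: cell_def S_def algebra_simps)
  ultimately show thesis using that n_def by blast
qed

lemma ex1_cell:
  assumes "u \<in> {0..<1}"
  shows "\<exists>!w. w \<in> words k \<and> u \<in> cell w"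
proof (induction k)
  case 0
  then show ?case using assms cell_Nil by auto
next
  case (Suc k)
  then obtain w where w: "w \<in> words k" "u \<in> cell w"
    and uniq: "\<And>v. v \<in> words k \<Longrightarrow> u \<in> cell v \<Longrightarrow> v = w"
    by blast
  obtain i where i: "i < length (net k)" "u \<in> cell (i # w)"
    using cell_Cons_cover[OF w(2)] unfolding length_words[OF w(1)] .
  show ?case
  proof (rule ex1I[of _ "i # w"])
    show "i # w \<in> words (Suc k) \<and> u \<in> cell (i # w)" using i w Cons_in_words_iff by blast
    fix v assume v: "v \<in> words (Suc k) \<and> u \<in> cell v"
    then obtain j w' where v': "v = j # w'" "j < length (net k)" "w' \<in> words k" by auto
    have "u \<in> cell w'"
      using v v' cell_Cons_subset[of j w'] unfolding length_words[OF v'(3)] by blast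
    then have "w' = w" using uniq v'(3) by blast
    moreover have "j = i"
    proof (rule linorder_cases[of i j])
      assume "i < j" then show ?thesis
        using cell_Cons_disjoint[OF _ i(2)] v v' \<open>w' = w\<close> by blast
    next
      assume "j < i" then show ?thesis
        using cell_Cons_disjoint[of j i u w] i(2) v v' \<open>w' = w\<close> by blast
    qed simp
    ultimately show "v = i # w" using v' by simp
  qed
qed

lemma cell_subset_unit: "w \<in> words k \<Longrightarrow> cell w \<subseteq> {0..<1}"
proof (induction k arbitrary: w)
  case (Suc k)
  then obtain i v where v: "w = i # v" "i < length (net k)" "v \<in> words k" by auto
  then have "cell w \<subseteq> cell v"
    using cell_Cons_subset[of i v] unfolding length_words[OF v(3)] by simp
  then show ?case using Suc.IH[OF v(3)] by blast
qed (simp add: cell_Nil)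

definition address :: "nat \<Rightarrow> real \<Rightarrow> nat list" where
  "address k u = (THE w. w \<in> words k \<and> u \<in> cell w)"

lemma address_in_words: "u \<in> {0..<1} \<Longrightarrow> address k u \<in> words k"
  and mem_cell_address: "u \<in> {0..<1} \<Longrightarrow> u \<in> cell (address k u)"
  unfolding address_def using theI'[OF ex1_cell] by blast+

lemma address_eqI: "u \<in> {0..<1} \<Longrightarrow> w \<in> words k \<Longrightarrow> u \<in> cell w \<Longrightarrow> address k u = w"
  unfolding address_def by (rule the1_equality[OF ex1_cell]) auto

lemma address_Suc:
  assumes "u \<in> {0..<1}"
  obtains i where "address (Suc k) u = i # address k u"
proof -
  obtain i v where v: "address (Suc k) u = i # v" "i < length (net k)" "v \<in> words k"
    using address_in_words[OF assms, of "Suc k"] by auto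
  then have "u \<in> cell v"
    using mem_cell_address[OF assms, of "Suc k"] cell_Cons_subset[of i v] length_words by force
  then have "address k u = v" by (rule address_eqI[OF assms v(3)])
  then show thesis using that v(1) by blast
qed

lemma mass_address_pos: "u \<in> {0..<1} \<Longrightarrow> 0 < mass (address k u)"
  using mem_cell_address[of u k] by (auto simp: cell_def)

lemma cell_fun_address_pos_mono:
  assumes "u \<in> {0..<1}" "k \<le> m" "0 < cell_fun (address m u) x"
  shows "0 < cell_fun (address k u) x"
  using assms(2,3)
proof (induction m rule: dec_induct)
  case (step m)
  obtain i where "address (Suc m) u = i # address m u" using address_Suc[OF assms(1)] .
  then show ?case
    using step cell_fun_nonneg[of "address m u" x] pou_nonneg[of "length (address m u)" i x]
    by (auto simp: zero_less_mult_iff)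
qed

definition sample :: "nat list \<Rightarrow> 'a" where
  "sample w = (SOME x. 0 < cell_fun w x)"

lemma cell_fun_sample_pos: "0 < mass w \<Longrightarrow> 0 < cell_fun w (sample w)"
  unfolding sample_def using mass_pos_imp_cell_fun_pos by (rule someI_ex)

definition approx_point :: "nat \<Rightarrow> real \<Rightarrow> 'a" where
  "approx_point k u = sample (address k u)"

lemma cell_fun_approx_point_pos: "u \<in> {0..<1} \<Longrightarrow> 0 < cell_fun (address k u) (approx_point k u)"
  unfolding approx_point_def by (intro cell_fun_sample_pos mass_address_pos)

lemma dist_approx_point:
  assumes "u \<in> {0..<1}" "Suc k \<le> m"
  shows "dist (approx_point m u) (approx_point (Suc k) u) < 4 * mesh k"
proof -
  obtain i where i: "address (Suc k) u = i # address k u" using address_Suc[OF assms(1)] .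
  have "0 < cell_fun (i # address k u) (approx_point m u)"
    using cell_fun_address_pos_mono[OF assms cell_fun_approx_point_pos[OF assms(1)]] i by simp
  moreover have "0 < cell_fun (i # address k u) (approx_point (Suc k) u)"
    using cell_fun_approx_point_pos[OF assms(1), of "Suc k"] i by simp
  ultimately show ?thesis
    using cell_fun_Cons_pos_imp_dist length_words[OF address_in_words[OF assms(1)]] by fastforce
qed

lemma Cauchy_approx_point:
  assumes "u \<in> {0..<1}"
  shows "Cauchy (\<lambda>k. approx_point k u)"
proof (rule metric_CauchyI)
  fix e :: real assume "0 < e"
  then obtain k where "\<forall>n\<ge>k. norm (mesh n - 0) < e / 8"
    using LIMSEQ_D[OF mesh_tendsto_0, of "e / 8"] by auto
  then have k: "mesh k < e / 8" using mesh_pos[of k] by auto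
  show "\<exists>N. \<forall>m\<ge>N. \<forall>n\<ge>N. dist (approx_point m u) (approx_point n u) < e"
  proof (intro exI allI impI)
    fix m n assume "Suc k \<le> m" "Suc k \<le> n"
    then have "dist (approx_point m u) (approx_point (Suc k) u) < 4 * mesh k"
      "dist (approx_point n u) (approx_point (Suc k) u) < 4 * mesh k"
      using dist_approx_point[OF assms] by blast+
    then show "dist (approx_point m u) (approx_point n u) < e"
      using dist_triangle2[of "approx_point m u" "approx_point n u" "approx_point (Suc k) u"] k
      by linarith
  qed
qed

definition limit_point :: "real \<Rightarrow> 'a" where
  "limit_point u = lim (\<lambda>k. approx_point k u)"

lemma approx_point_tendsto: "u \<in> {0..<1} \<Longrightarrow> (\<lambda>k. approx_point k u) \<longlonglongrightarrow> limit_point u"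
proof -
  assume "u \<in> {0..<1}"
  have "Topological_Spaces.complete (UNIV :: 'a set)"
    by (rule compact_imp_complete[OF compact_space])
  then obtain l where "(\<lambda>k. approx_point k u) \<longlonglongrightarrow> l"
    by (rule completeE) (use Cauchy_approx_point[OF \<open>u \<in> {0..<1}\<close>] in auto)
  then show ?thesis unfolding limit_point_def by (simp add: limI)
qed

lemma dist_limit_point:
  assumes "u \<in> {0..<1}"
  shows "dist (limit_point u) (approx_point (Suc k) u) \<le> 4 * mesh k"
proof (rule LIMSEQ_le_const2)
  show "(\<lambda>m. dist (approx_point m u) (approx_point (Suc k) u))
      \<longlonglongrightarrow> dist (limit_point u) (approx_point (Suc k) u)"
    by (intro tendsto_dist approx_point_tendsto[OF assms] tendsto_const)
  show "\<exists>N. \<forall>m\<ge>N. dist (approx_point m u) (approx_point (Suc k) u) \<le> 4 * mesh k"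
    using dist_approx_point[OF assms] less_imp_le by blast
qed

lemma measurable_address: "address k \<in> measurable uniform01 (count_space UNIV)"
  unfolding measurable_count_space_eq2_countable
proof (intro conjI ballI)
  fix w
  show "address k -` {w} \<inter> space uniform01 \<in> sets uniform01"
  proof (cases "w \<in> words k")
    case True
    have "address k -` {w} \<inter> space uniform01 = cell w"
    proof (intro set_eqI iffI)
      fix u assume "u \<in> address k -` {w} \<inter> space uniform01"
      then show "u \<in> cell w" using mem_cell_address[of u k] by (auto simp: space_uniform01)
    next
      fix u assume "u \<in> cell w"
      moreover from this have "u \<in> {0..<1}" using cell_subset_unit[OF True] by blast
      ultimately show "u \<in> address k -` {w} \<inter> space uniform01"
        using address_eqI[OF _ True] by (simp add: space_uniform01)
    qed
    then show ?thesis
      using cell_subset_unit[OF True] by (simp add: sets_uniform01 cell_def)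
  next
    case False
    then have "address k -` {w} \<inter> space uniform01 = {}"
      using address_in_words[of _ k] by (auto simp: space_uniform01)
    then show ?thesis by simp
  qed
qed simp

lemma measurable_approx_point: "approx_point k \<in> borel_measurable uniform01"
  unfolding approx_point_def[abs_def] by (rule measurable_compose[OF measurable_address]) simp

lemma measurable_limit_point: "limit_point \<in> borel_measurable uniform01"
  by (rule borel_measurable_LIMSEQ_metric[OF measurable_approx_point approx_point_tendsto])
    (simp add: space_uniform01)

lemma cell_in_sets_uniform01: "w \<in> words k \<Longrightarrow> cell w \<in> sets uniform01"
  using cell_subset_unit[of w k] by (simp add: sets_uniform01 cell_def)

lemma measure_uniform01_cell: "w \<in> words k \<Longrightarrow> measure uniform01 (cell w) = mass w"
proof -
  assume "w \<in> words k"
  then have "measure uniform01 (cell w) = measure lborel (cell w)"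
    unfolding uniform01_def using cell_subset_unit[of w k]
    by (intro measure_restrict_space) (auto simp: cell_def)
  then show ?thesis by (simp add: cell_def mass_nonneg)
qed

lemma approx_point_eq_sum_indicator:
  fixes f :: "'a \<Rightarrow> real"
  assumes "u \<in> {0..<1}"
  shows "f (approx_point k u) = (\<Sum>w\<in>words k. f (sample w) * indicator (cell w) u)"
proof -
  have "u \<in> cell w \<longleftrightarrow> w = address k u" if "w \<in> words k" for w
    using address_eqI[OF assms that] mem_cell_address[OF assms, of k] by blast
  then have "(\<Sum>w\<in>words k. f (sample w) * indicator (cell w) u)
      = (\<Sum>w\<in>words k. if w = address k u then f (sample w) else 0)"
    by (intro sum.cong) (simp_all add: indicator_def)
  also have "\<dots> = f (approx_point k u)"
    by (simp add: sum.delta[OF finite_words] address_in_words[OF assms] approx_point_def)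
  finally show ?thesis by simp
qed

lemma integral_approx_point:
  fixes f :: "'a \<Rightarrow> real"
  shows "(\<integral>u. f (approx_point k u) \<partial>uniform01) = (\<Sum>w\<in>words k. f (sample w) * mass w)"
proof -
  interpret prob_space uniform01 by (rule prob_space_uniform01)
  have "(\<integral>u. f (approx_point k u) \<partial>uniform01)
      = (\<integral>u. (\<Sum>w\<in>words k. f (sample w) * indicator (cell w) u) \<partial>uniform01)"
    using approx_point_eq_sum_indicator
    by (intro Bochner_Integration.integral_cong) (simp_all add: space_uniform01)
  also have "\<dots> = (\<Sum>w\<in>words k. (\<integral>u. f (sample w) * indicator (cell w) u \<partial>uniform01))"
    using cell_in_sets_uniform01 emeasure_finite
    by (intro Bochner_Integration.integral_sum) (simp add: less_top[symmetric])
  also have "\<dots> = (\<Sum>w\<in>words k. f (sample w) * mass w)"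
    using cell_in_sets_uniform01 measure_uniform01_cell by (intro sum.cong) simp_all
  finally show ?thesis .
qed

lemma abs_diff_sum_cell_fun_le:
  assumes "C-lipschitz_on UNIV f"
  shows "\<bar>f x - (\<Sum>w\<in>words (Suc k). f (sample w) * cell_fun w x)\<bar> \<le> C * (4 * mesh k)"
proof -
  have "f x - (\<Sum>w\<in>words (Suc k). f (sample w) * cell_fun w x)
      = (\<Sum>w\<in>words (Suc k). (f x - f (sample w)) * cell_fun w x)"
    using sum_cell_fun_words[of x "Suc k"]
    by (simp add: left_diff_distrib sum_subtractf sum_distrib_left[symmetric])
  also have "\<bar>\<dots>\<bar> \<le> (\<Sum>w\<in>words (Suc k). C * (4 * mesh k) * cell_fun w x)"
  proof (rule order_trans[OF sum_abs sum_mono])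
    fix w assume w: "w \<in> words (Suc k)"
    show "\<bar>(f x - f (sample w)) * cell_fun w x\<bar> \<le> C * (4 * mesh k) * cell_fun w x"
    proof (cases "0 < cell_fun w x")
      case True
      obtain i v where v: "w = i # v" "v \<in> words k" using w by auto
      have "0 < cell_fun w (sample w)" using True by (auto simp: sample_def intro: someI)
      then have "dist x (sample w) \<le> 4 * mesh k"
        using cell_fun_Cons_pos_imp_dist[of i v x "sample w"] True v length_words by fastforce
      then have "\<bar>f x - f (sample w)\<bar> \<le> C * (4 * mesh k)"
        using assms lipschitz_on_nonneg[OF assms] unfolding lipschitz_on_UNIV_real_iff
        by (meson mult_left_mono order_trans)
      then show ?thesis using cell_fun_nonneg[of w x] by (simp add: abs_mult mult_right_mono)
    qed (use cell_fun_nonneg[of w x] in simp)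
  qed
  also have "\<dots> = C * (4 * mesh k)"
    using sum_cell_fun_words[of x "Suc k"] by (simp add: sum_distrib_left[symmetric])
  finally show ?thesis .
qed

lemma abs_\<Phi>_diff_sum_le:
  assumes "C-lipschitz_on UNIV f"
  shows "\<bar>\<Phi> f - (\<Sum>w\<in>words (Suc k). f (sample w) * mass w)\<bar> \<le> C * (4 * mesh k)"
proof -
  define g where "g x = (\<Sum>w\<in>words (Suc k). f (sample w) * cell_fun w x)" for x
  have lf: "lipschitz f" using assms by (rule lipschitzI)
  have lg: "lipschitz g"
    unfolding g_def[abs_def] by (intro lipschitz_sum lipschitz_cmult lipschitz_cell_fun)
  have \<Phi>g: "\<Phi> g = (\<Sum>w\<in>words (Suc k). f (sample w) * mass w)"
    unfolding g_def[abs_def] mass_def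
    by (simp add: \<Phi>_sum finite_words lipschitz_cmult lipschitz_cell_fun \<Phi>_cmult)
  note close = abs_diff_sum_cell_fun_le[OF assms, of _ k, folded g_def]
  have "f x \<le> g x + C * (4 * mesh k)" for x using close[of x] by (simp add: abs_le_iff)
  then have "\<Phi> f \<le> \<Phi> (\<lambda>x. g x + C * (4 * mesh k))"
    by (intro \<Phi>_mono lf lg lipschitz_add lipschitz_const)
  moreover have "g x \<le> f x + C * (4 * mesh k)" for x using close[of x] by (simp add: abs_le_iff)
  then have "\<Phi> g \<le> \<Phi> (\<lambda>x. f x + C * (4 * mesh k))"
    by (intro \<Phi>_mono lf lg lipschitz_add lipschitz_const)
  ultimately show ?thesis
    unfolding \<Phi>_add_const[OF lf] \<Phi>_add_const[OF lg] \<Phi>g by (simp add: abs_le_iff)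
qed

lemma abs_integral_limit_point_minus_approx_point_le:
  assumes "C-lipschitz_on UNIV f"
  shows "\<bar>(\<integral>u. f (limit_point u) \<partial>uniform01) - (\<integral>u. f (approx_point (Suc k) u) \<partial>uniform01)\<bar>
    \<le> C * (4 * mesh k)"
proof -
  interpret prob_space uniform01 by (rule prob_space_uniform01)
  have meas: "f \<in> borel_measurable borel" by (rule lipschitz_on_UNIV_borel_measurable[OF assms])
  obtain B where B: "\<And>x. \<bar>f x\<bar> \<le> B"
    using lipschitz_bounded[OF compact_space lipschitzI[OF assms]] by blast
  have int: "integrable uniform01 (\<lambda>u. f (g u))" if "g \<in> borel_measurable uniform01" for g
    using B measurable_compose[OF that meas] by (intro integrable_const_bound[where B=B]) auto
  have int_lim: "integrable uniform01 (\<lambda>u. f (limit_point u))"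
    and int_approx: "integrable uniform01 (\<lambda>u. f (approx_point (Suc k) u))"
    using int measurable_limit_point measurable_approx_point by blast+
  have "\<bar>(\<integral>u. f (limit_point u) - f (approx_point (Suc k) u) \<partial>uniform01) - 0\<bar> \<le> C * (4 * mesh k)"
  proof (rule abs_integral_diff_const_le)
    show "integrable uniform01 (\<lambda>u. f (limit_point u) - f (approx_point (Suc k) u))"
      using int_lim int_approx by (rule Bochner_Integration.integrable_diff)
    fix u assume "u \<in> space uniform01"
    then have "dist (limit_point u) (approx_point (Suc k) u) \<le> 4 * mesh k"
      by (simp add: space_uniform01 dist_limit_point)
    then have "C * dist (limit_point u) (approx_point (Suc k) u) \<le> C * (4 * mesh k)"
      using lipschitz_on_nonneg[OF assms] by (rule mult_left_mono)
    moreover have "\<bar>f (limit_point u) - f (approx_point (Suc k) u)\<bar>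
        \<le> C * dist (limit_point u) (approx_point (Suc k) u)"
      using assms unfolding lipschitz_on_UNIV_real_iff by blast
    ultimately show "\<bar>f (limit_point u) - f (approx_point (Suc k) u) - 0\<bar> \<le> C * (4 * mesh k)"
      by simp
  qed
  then show ?thesis
    using Bochner_Integration.integral_diff[OF int_lim int_approx] by simp
qed

definition representing_measure :: "'a measure" where
  "representing_measure = distr uniform01 borel limit_point"

lemma representing_measure_in_prob_measures: "representing_measure \<in> prob_measures"
  unfolding prob_measures_def representing_measure_def
  using prob_space.prob_space_distr[OF prob_space_uniform01 measurable_limit_point] by simp

lemma integral_representing_measure:
  assumes "lipschitz f"
  shows "(\<integral>x. f x \<partial>representing_measure) = \<Phi> f"
proof -
  obtain C where C: "C-lipschitz_on UNIV f" using assms unfolding lipschitz_def by blast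
  have "(\<integral>x. f x \<partial>representing_measure) = (\<integral>u. f (limit_point u) \<partial>uniform01)"
    unfolding representing_measure_def
    by (rule integral_distr[OF measurable_limit_point lipschitz_on_UNIV_borel_measurable[OF C]])
  then have bound: "\<bar>\<Phi> f - (\<integral>x. f x \<partial>representing_measure)\<bar> \<le> 2 * (C * (4 * mesh k))" for k
    using abs_integral_limit_point_minus_approx_point_le[OF C, of k]
      abs_\<Phi>_diff_sum_le[OF C, of k] integral_approx_point[of f "Suc k"]
    unfolding abs_le_iff by linarith
  have "(\<lambda>k. 2 * (C * (4 * mesh k))) \<longlonglongrightarrow> 0"
    by (intro tendsto_mult_right_zero tendsto_mult_left_zero mesh_tendsto_0)
  then have "\<bar>\<Phi> f - (\<integral>x. f x \<partial>representing_measure)\<bar> \<le> 0"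
    by (rule LIMSEQ_le_const) (use bound in blast)
  then show ?thesis by simp
qed

end

theorem (in positive_lipschitz_functional) lipschitz_functional_representation:
  "\<exists>\<mu>\<in>prob_measures. \<forall>f. lipschitz f \<longrightarrow> (\<integral>x. f x \<partial>\<mu>) = \<Phi> f"
  using representing_measure_in_prob_measures integral_representing_measure by blast

lemma tau_seq_Nil [simp]: "tau_seq \<tau> [] x = x"
  by (simp add: tau_seq_def)

lemma tau_seq_Cons [simp]: "tau_seq \<tau> (l # ls) x = tau_seq \<tau> ls (\<tau> l x)"
  by (simp add: tau_seq_def)

lemma lipschitz_on_comp_fst:
  "C-lipschitz_on UNIV g \<Longrightarrow> C-lipschitz_on UNIV (\<lambda>p. g (fst p))"
  unfolding lipschitz_on_def
  by (meson UNIV_I dist_fst_le mult_left_mono order_trans)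

lemma lipschitz_on_comp_snd:
  "C-lipschitz_on UNIV g \<Longrightarrow> C-lipschitz_on UNIV (\<lambda>p. g (snd p))"
  unfolding lipschitz_on_def
  by (meson UNIV_I dist_snd_le mult_left_mono order_trans)

locale lipschitz_kernel =
  fixes \<tau> :: "'l::metric_space \<Rightarrow> 'a::metric_space \<Rightarrow> 'a"
    and q :: "'a \<Rightarrow> 'l measure"
    and r t :: real
  assumes compact_states: "compact (UNIV :: 'a set)"
    and compact_params: "compact (UNIV :: 'l set)"
    and q_prob: "\<And>x. q x \<in> prob_measures"
    and tau_nonexpansive: "\<And>l x y. dist (\<tau> l x) (\<tau> l y) \<le> dist x y"
    and r_nonneg: "0 \<le> r"
    and tau_lipschitz_param: "\<And>l1 l2 x. dist (\<tau> l1 x) (\<tau> l2 x) \<le> r * dist l1 l2"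
    and t_nonneg: "0 \<le> t"
    and q_dMK_lipschitz: "\<And>x y. dMK (q x) (q y) \<le> t * dist x y"
begin

lemma prob_space_q: "prob_space (q x)"
  using prob_measuresD(1)[OF q_prob] .

lemma lipschitz_on_tau_param: "r-lipschitz_on UNIV (\<lambda>l. \<tau> l x)"
  using tau_lipschitz_param r_nonneg by (intro lipschitz_onI) auto

lemma lipschitz_on_comp_tau_param:
  "C-lipschitz_on UNIV f \<Longrightarrow> (C * r)-lipschitz_on UNIV (\<lambda>l. f (\<tau> l x))"
  using lipschitz_on_compose2[OF lipschitz_on_tau_param lipschitz_on_subset] by blast

lemma integrable_q_comp_tau:
  fixes f :: "'a \<Rightarrow> real"
  assumes "C-lipschitz_on UNIV f"
  shows "integrable (q y) (\<lambda>l. f (\<tau> l x))"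
  by (rule integrable_lipschitz[OF compact_params q_prob
        lipschitzI[OF lipschitz_on_comp_tau_param[OF assms]]])

lemma abs_integral_q_diff_le:
  assumes "C-lipschitz_on UNIV g"
  shows "\<bar>(\<integral>l. g l \<partial>q x) - (\<integral>l. g l \<partial>q y)\<bar> \<le> C * t * dist x y"
proof -
  have "(\<integral>l. g l \<partial>q x) - (\<integral>l. g l \<partial>q y) \<le> C * t * dist x y" for x y
  proof -
    have "(\<integral>l. g l \<partial>q x) - (\<integral>l. g l \<partial>q y) \<le> C * dMK (q x) (q y)"
      by (rule integral_diff_le_dMK[OF compact_params q_prob q_prob assms])
    also have "\<dots> \<le> C * (t * dist x y)"
      using q_dMK_lipschitz lipschitz_on_nonneg[OF assms] by (rule mult_left_mono)
    finally show ?thesis by simp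
  qed
  from this[of x y] this[of y x] show ?thesis by (simp add: dist_commute)
qed

definition Tq_dual :: "('a \<Rightarrow> real) \<Rightarrow> 'a \<Rightarrow> real" where
  "Tq_dual f x = (\<integral>l. f (\<tau> l x) \<partial>q x)"

lemma lipschitz_on_Tq_dual:
  assumes "C-lipschitz_on UNIV f"
  shows "(C * (1 + r * t))-lipschitz_on UNIV (Tq_dual f)"
  unfolding lipschitz_on_UNIV_real_iff
proof (intro conjI allI)
  show "0 \<le> C * (1 + r * t)"
    using lipschitz_on_nonneg[OF assms] r_nonneg t_nonneg by simp
  fix x y
  have int: "integrable (q x) (\<lambda>l. f (\<tau> l z))" for z
    by (rule integrable_q_comp_tau[OF assms])
  have "\<bar>(\<integral>l. f (\<tau> l x) - f (\<tau> l y) \<partial>q x) - 0\<bar> \<le> C * dist x y"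
  proof (rule prob_space.abs_integral_diff_const_le[OF prob_space_q])
    show "integrable (q x) (\<lambda>l. f (\<tau> l x) - f (\<tau> l y))" using int by simp
    fix l
    have "\<bar>f (\<tau> l x) - f (\<tau> l y)\<bar> \<le> C * dist (\<tau> l x) (\<tau> l y)"
      using assms unfolding lipschitz_on_UNIV_real_iff by blast
    also have "\<dots> \<le> C * dist x y"
      using tau_nonexpansive lipschitz_on_nonneg[OF assms] by (rule mult_left_mono)
    finally show "\<bar>f (\<tau> l x) - f (\<tau> l y) - 0\<bar> \<le> C * dist x y" by simp
  qed
  moreover have "\<bar>(\<integral>l. f (\<tau> l y) \<partial>q x) - (\<integral>l. f (\<tau> l y) \<partial>q y)\<bar> \<le> C * r * t * dist x y"
    by (rule abs_integral_q_diff_le[OF lipschitz_on_comp_tau_param[OF assms]])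
  ultimately show "\<bar>Tq_dual f x - Tq_dual f y\<bar> \<le> C * (1 + r * t) * dist x y"
    using int by (simp add: Tq_dual_def algebra_simps abs_le_iff)
qed

lemma Tq_dual_diff:
  "C-lipschitz_on UNIV f \<Longrightarrow> D-lipschitz_on UNIV g \<Longrightarrow>
    Tq_dual (\<lambda>x. f x - g x) x = Tq_dual f x - Tq_dual g x"
  unfolding Tq_dual_def by (simp add: integrable_q_comp_tau)

lemma Tq_dual_add:
  "C-lipschitz_on UNIV f \<Longrightarrow> D-lipschitz_on UNIV g \<Longrightarrow>
    Tq_dual (\<lambda>x. f x + g x) x = Tq_dual f x + Tq_dual g x"
  unfolding Tq_dual_def by (simp add: integrable_q_comp_tau)

lemma Tq_dual_cmult: "Tq_dual (\<lambda>x. c * f x) x = c * Tq_dual f x"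
  by (simp add: Tq_dual_def)

lemma Tq_dual_const: "Tq_dual (\<lambda>x. c) x = c"
  by (simp add: Tq_dual_def prob_space.prob_space[OF prob_space_q])

lemma Tq_dual_mono:
  "C-lipschitz_on UNIV f \<Longrightarrow> D-lipschitz_on UNIV g \<Longrightarrow> (\<And>x. f x \<le> g x) \<Longrightarrow>
    Tq_dual f x \<le> Tq_dual g x"
  unfolding Tq_dual_def by (intro integral_mono integrable_q_comp_tau)

lemma lipschitz_on_Tq_dual_pow:
  "C-lipschitz_on UNIV f \<Longrightarrow> (C * (1 + r * t) ^ n)-lipschitz_on UNIV ((Tq_dual ^^ n) f)"
proof (induction n)
  case (Suc n)
  then show ?case using lipschitz_on_Tq_dual[OF Suc.IH[OF Suc.prems]] by (simp add: ac_simps)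
qed simp

lemma Tq_dual_pow_add:
  assumes "C-lipschitz_on UNIV f" "D-lipschitz_on UNIV g"
  shows "(Tq_dual ^^ n) (\<lambda>x. f x + g x) = (\<lambda>x. (Tq_dual ^^ n) f x + (Tq_dual ^^ n) g x)"
proof (induction n)
  case (Suc n)
  show ?case
    using Tq_dual_add[OF lipschitz_on_Tq_dual_pow[OF assms(1)]
        lipschitz_on_Tq_dual_pow[OF assms(2)]]
    by (simp add: Suc.IH)
qed simp

lemma Tq_dual_pow_cmult: "(Tq_dual ^^ n) (\<lambda>x. c * f x) = (\<lambda>x. c * (Tq_dual ^^ n) f x)"
  by (induction n) (simp_all add: Tq_dual_cmult[of c])

lemma Tq_dual_pow_const: "(Tq_dual ^^ n) (\<lambda>x. c) = (\<lambda>x. c)"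
  by (induction n) (simp_all add: Tq_dual_const)

lemma Tq_dual_pow_mono:
  assumes "C-lipschitz_on UNIV f" "D-lipschitz_on UNIV g" "\<And>x. f x \<le> g x"
  shows "(Tq_dual ^^ n) f x \<le> (Tq_dual ^^ n) g x"
proof (induction n arbitrary: x)
  case (Suc n)
  show ?case
    using Tq_dual_mono[OF lipschitz_on_Tq_dual_pow[OF assms(1)]
        lipschitz_on_Tq_dual_pow[OF assms(2)]]
      Suc.IH by simp
qed (simp add: assms(3))

lemma Tq_dual_pow_bounds:
  assumes "C-lipschitz_on UNIV f" "\<And>x. a \<le> f x" "\<And>x. f x \<le> b"
  shows "a \<le> (Tq_dual ^^ n) f x" "(Tq_dual ^^ n) f x \<le> b"
  using Tq_dual_pow_mono[OF lipschitz_on_constant assms(1), of a n x]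
    Tq_dual_pow_mono[OF assms(1) lipschitz_on_constant, of b n x] assms(2,3)
  by (simp_all add: Tq_dual_pow_const)

text \<open>On pairs, both points move with the same parameter, drawn from the law at the first point:
  this synchronous coupling is what the path integral in (MP1) measures.\<close>

lemma pair_lipschitz_kernel:
  "lipschitz_kernel (\<lambda>l p. (\<tau> l (fst p), \<tau> l (snd p))) (\<lambda>p. q (fst p)) (sqrt 2 * r) t"
proof
  show "compact (UNIV :: ('a \<times> 'a) set)"
    using compact_Times[OF compact_states compact_states] by simp
  show "dist (\<tau> l (fst x), \<tau> l (snd x)) (\<tau> l (fst y), \<tau> l (snd y)) \<le> dist x y" for l x y
    unfolding dist_prod_def
    by (intro real_sqrt_le_mono add_mono power_mono) (simp_all add: tau_nonexpansive)
  show "dist (\<tau> l1 (fst x), \<tau> l1 (snd x)) (\<tau> l2 (fst x), \<tau> l2 (snd x)) \<le> sqrt 2 * r * dist l1 l2"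
    for l1 l2 x
  proof -
    have "(dist (\<tau> l1 z) (\<tau> l2 z))\<^sup>2 \<le> (r * dist l1 l2)\<^sup>2" for z
      by (intro power_mono tau_lipschitz_param) simp
    then have "dist (\<tau> l1 (fst x), \<tau> l1 (snd x)) (\<tau> l2 (fst x), \<tau> l2 (snd x))
        \<le> sqrt ((r * dist l1 l2)\<^sup>2 + (r * dist l1 l2)\<^sup>2)"
      unfolding dist_prod_def by (intro real_sqrt_le_mono add_mono) simp_all
    also have "\<dots> = sqrt (2 * (r * dist l1 l2)\<^sup>2)" by simp
    also have "\<dots> = sqrt 2 * r * dist l1 l2"
      using r_nonneg by (simp add: real_sqrt_mult)
    finally show ?thesis .
  qed
  show "dMK (q (fst x)) (q (fst y)) \<le> t * dist x y" for x y
    using q_dMK_lipschitz[of "fst x" "fst y"] mult_left_mono[OF dist_fst_le t_nonneg]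
    by (rule order_trans)
qed (use compact_params q_prob r_nonneg t_nonneg in auto)

interpretation pair:
  lipschitz_kernel "\<lambda>l p. (\<tau> l (fst p), \<tau> l (snd p))" "\<lambda>p. q (fst p)" "sqrt 2 * r" t
  by (rule pair_lipschitz_kernel)

lemma pair_Tq_dual_pow_fst:
  "(pair.Tq_dual ^^ n) (\<lambda>p. g (fst p)) = (\<lambda>p. (Tq_dual ^^ n) g (fst p))"
  by (induction n) (simp_all add: pair.Tq_dual_def Tq_dual_def)

lemma lipschitz_on_pair_Tq_dual_pow_fst:
  "C-lipschitz_on UNIV g \<Longrightarrow>
    (C * (1 + sqrt 2 * r * t) ^ n)-lipschitz_on UNIV ((pair.Tq_dual ^^ n) (\<lambda>p. g (fst p)))"
  by (intro pair.lipschitz_on_Tq_dual_pow lipschitz_on_comp_fst)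

lemma lipschitz_on_pair_Tq_dual_pow_snd:
  "C-lipschitz_on UNIV g \<Longrightarrow>
    (C * (1 + sqrt 2 * r * t) ^ n)-lipschitz_on UNIV ((pair.Tq_dual ^^ n) (\<lambda>p. g (snd p)))"
  by (intro pair.lipschitz_on_Tq_dual_pow lipschitz_on_comp_snd)

lemma pair_Tq_dual_pow_fst_snd_le_P_int:
  assumes "C-lipschitz_on UNIV g"
  shows "ennreal \<bar>(pair.Tq_dual ^^ n) (\<lambda>p. g (fst p)) (x, y)
      - (pair.Tq_dual ^^ n) (\<lambda>p. g (snd p)) (x, y)\<bar>
    \<le> P_int \<tau> q n x (\<lambda>ls. ennreal \<bar>g (tau_seq \<tau> ls x) - g (tau_seq \<tau> ls y)\<bar>)"
proof (induction n arbitrary: x y)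
  case (Suc n)
  define D where
    "D = (\<lambda>p. (pair.Tq_dual ^^ n) (\<lambda>p. g (fst p)) p - (pair.Tq_dual ^^ n) (\<lambda>p. g (snd p)) p)"
  note lips = lipschitz_on_pair_Tq_dual_pow_fst[OF assms, of n]
    lipschitz_on_pair_Tq_dual_pow_snd[OF assms, of n]
  have "(pair.Tq_dual ^^ Suc n) (\<lambda>p. g (fst p)) (x, y)
      - (pair.Tq_dual ^^ Suc n) (\<lambda>p. g (snd p)) (x, y)
      = pair.Tq_dual D (x, y)"
    unfolding D_def using pair.Tq_dual_diff[OF lips] by simp
  also have "\<bar>\<dots>\<bar> \<le> (\<integral>l. \<bar>D (\<tau> l x, \<tau> l y)\<bar> \<partial>q x)"
    unfolding pair.Tq_dual_def by (simp add: integral_abs_bound)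
  finally have "ennreal \<bar>(pair.Tq_dual ^^ Suc n) (\<lambda>p. g (fst p)) (x, y)
      - (pair.Tq_dual ^^ Suc n) (\<lambda>p. g (snd p)) (x, y)\<bar> \<le> (\<integral>\<^sup>+l. \<bar>D (\<tau> l x, \<tau> l y)\<bar> \<partial>q x)"
    using pair.integrable_q_comp_tau[OF lipschitz_on_diff[OF lips], of "(x, y)" "(x, y)"]
    by (subst nn_integral_eq_integral) (auto simp: D_def intro!: ennreal_leI)
  also have "\<dots> \<le> (\<integral>\<^sup>+l. P_int \<tau> q n (\<tau> l x)
      (\<lambda>ls. ennreal \<bar>g (tau_seq \<tau> ls (\<tau> l x)) - g (tau_seq \<tau> ls (\<tau> l y))\<bar>) \<partial>q x)"
    using Suc.IH unfolding D_def by (intro nn_integral_mono) simp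
  finally show ?case by simp
qed simp

lemma abs_pair_Tq_dual_pow_snd_diff_le:
  assumes "C-lipschitz_on UNIV g" "\<And>j. j < k \<Longrightarrow> (L j)-lipschitz_on UNIV ((Tq_dual ^^ j) g)"
  shows "\<bar>(pair.Tq_dual ^^ k) (\<lambda>p. g (snd p)) (z, w) - (Tq_dual ^^ k) g w\<bar>
    \<le> r * t * dist z w * (\<Sum>j<k. L j)"
  using assms(2)
proof (induction k arbitrary: z w)
  case (Suc k)
  define S where "S = (pair.Tq_dual ^^ k) (\<lambda>p. g (snd p))"
  define G where "G = (Tq_dual ^^ k) g"
  have S: "(C * (1 + sqrt 2 * r * t) ^ k)-lipschitz_on UNIV S"
    unfolding S_def by (rule lipschitz_on_pair_Tq_dual_pow_snd[OF assms(1)])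
  have G: "(L k)-lipschitz_on UNIV G" unfolding G_def using Suc.prems by simp
  have int_S: "integrable (q z) (\<lambda>l. S (\<tau> l z, \<tau> l w))"
    using pair.integrable_q_comp_tau[OF S, of "(z, w)" "(z, w)"] by simp
  have int_G: "integrable (q y) (\<lambda>l. G (\<tau> l w))" for y
    by (rule integrable_q_comp_tau[OF G])
  have sum_nonneg: "0 \<le> (\<Sum>j<k. L j)"
    using Suc.prems by (intro sum_nonneg) (meson lessThan_iff less_SucI lipschitz_on_nonneg)
  have "\<bar>(\<integral>l. S (\<tau> l z, \<tau> l w) - G (\<tau> l w) \<partial>q z) - 0\<bar> \<le> r * t * dist z w * (\<Sum>j<k. L j)"
  proof (rule prob_space.abs_integral_diff_const_le[OF prob_space_q])
    show "integrable (q z) (\<lambda>l. S (\<tau> l z, \<tau> l w) - G (\<tau> l w))"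
      using int_S int_G by simp
    fix l
    have "\<bar>S (\<tau> l z, \<tau> l w) - G (\<tau> l w)\<bar> \<le> r * t * dist (\<tau> l z) (\<tau> l w) * (\<Sum>j<k. L j)"
      unfolding S_def G_def using Suc.prems by (intro Suc.IH) simp
    also have "\<dots> \<le> r * t * dist z w * (\<Sum>j<k. L j)"
      using tau_nonexpansive r_nonneg t_nonneg sum_nonneg
      by (intro mult_right_mono mult_left_mono) simp_all
    finally show "\<bar>S (\<tau> l z, \<tau> l w) - G (\<tau> l w) - 0\<bar> \<le> r * t * dist z w * (\<Sum>j<k. L j)"
      by simp
  qed
  moreover have "\<bar>(\<integral>l. G (\<tau> l w) \<partial>q z) - (\<integral>l. G (\<tau> l w) \<partial>q w)\<bar> \<le> L k * r * t * dist z w"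
    by (rule abs_integral_q_diff_le[OF lipschitz_on_comp_tau_param[OF G]])
  moreover have "(pair.Tq_dual ^^ Suc k) (\<lambda>p. g (snd p)) (z, w) - (Tq_dual ^^ Suc k) g w
      = (\<integral>l. S (\<tau> l z, \<tau> l w) - G (\<tau> l w) \<partial>q z)
        + ((\<integral>l. G (\<tau> l w) \<partial>q z) - (\<integral>l. G (\<tau> l w) \<partial>q w))"
    using int_S int_G by (simp add: S_def G_def pair.Tq_dual_def Tq_dual_def)
  ultimately show ?case
    by (simp add: abs_le_iff algebra_simps)
qed simp

definition transition :: "'a \<Rightarrow> 'a measure" where
  "transition x = distr (q x) borel (\<lambda>l. \<tau> l x)"

lemma measurable_tau_param: "(\<lambda>l. \<tau> l x) \<in> borel_measurable (q x)"
  by (rule prob_measures_measurable[OF q_prob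
        lipschitz_on_UNIV_borel_measurable[OF lipschitz_on_tau_param]])

lemma transition_in_prob_measures: "transition x \<in> prob_measures"
  unfolding prob_measures_def transition_def
  using prob_space.prob_space_distr[OF prob_space_q measurable_tau_param] by simp

lemma integral_transition:
  "C-lipschitz_on UNIV f \<Longrightarrow> (\<integral>y. f y \<partial>transition x) = Tq_dual f x"
  unfolding transition_def Tq_dual_def
  by (rule integral_distr[OF measurable_tau_param lipschitz_on_UNIV_borel_measurable])

lemma measurable_transition: "transition \<in> measurable borel (subprob_algebra borel)"
proof (rule measurable_subprob_algebra_generated[where G="{S. open S}" and \<Omega>=UNIV and N=borel])
  show "sets (borel :: 'a measure) = sigma_sets UNIV {S. open S}" by (simp add: sets_borel)
  show "Int_stable {S :: 'a set. open S}" by (auto simp: Int_stable_def)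
  show "subprob_space (transition a)" "sets (transition a) = sets borel" for a
    using prob_measuresD(1,2)[OF transition_in_prob_measures]
    by (simp_all add: prob_space_imp_subprob_space)
  have univ: "emeasure (transition a) UNIV = 1" for a
    using prob_space.emeasure_space_1[OF prob_measuresD(1)] prob_measuresD(3)
      transition_in_prob_measures by metis
  then show "(\<lambda>a. emeasure (transition a) UNIV) \<in> borel_measurable borel" by simp
  fix A :: "'a set" assume "A \<in> {S. open S}"
  then have A: "open A" by simp
  show "(\<lambda>a. emeasure (transition a) A) \<in> borel_measurable borel"
  proof (cases "A = UNIV")
    case False
    have eq: "(\<lambda>a. emeasure (transition a) A) = (\<lambda>a. SUP n. ennreal (Tq_dual (open_cutoff A n) a))"
      using emeasure_open_eq_SUP_open_cutoff[OF transition_in_prob_measures A False]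
      by (simp add: integral_transition[OF lipschitz_on_open_cutoff])
    have [measurable]: "Tq_dual (open_cutoff A n) \<in> borel_measurable borel" for n
      by (rule lipschitz_on_UNIV_borel_measurable[OF
            lipschitz_on_Tq_dual[OF lipschitz_on_open_cutoff]])
    show ?thesis unfolding eq by measurable
  qed (simp add: univ)
qed auto

lemma Tq_eq_bind_transition: "Tq \<tau> q \<mu> = \<mu> \<bind> transition"
  by (simp add: Tq_def transition_def[abs_def])

lemma Tq_in_prob_measures:
  assumes "\<mu> \<in> prob_measures"
  shows "Tq \<tau> q \<mu> \<in> prob_measures"
proof -
  interpret prob_space \<mu> using prob_measuresD(1)[OF assms] .
  have meas: "transition \<in> measurable \<mu> (subprob_algebra borel)"
    using measurable_cong_sets[OF prob_measuresD(2)[OF assms] refl] measurable_transition by blast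
  have "prob_space (\<mu> \<bind> transition)"
    by (rule prob_space_bind[OF _ meas])
      (simp add: prob_measuresD(1)[OF transition_in_prob_measures])
  moreover have "sets (\<mu> \<bind> transition) = sets borel"
    by (rule sets_bind) (auto simp: prob_measuresD(2)[OF transition_in_prob_measures] not_empty)
  ultimately show ?thesis unfolding Tq_eq_bind_transition prob_measures_def by simp
qed

lemma integral_Tq:
  assumes "\<mu> \<in> prob_measures" "C-lipschitz_on UNIV f"
  shows "(\<integral>y. f y \<partial>Tq \<tau> q \<mu>) = (\<integral>x. Tq_dual f x \<partial>\<mu>)"
proof -
  interpret prob_space \<mu> using prob_measuresD(1)[OF assms(1)] .
  obtain B where B: "\<And>x. \<bar>f x\<bar> \<le> B"
    using lipschitz_bounded[OF compact_states lipschitzI[OF assms(2)]] by blast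
  have "(\<integral>y. f y \<partial>(\<mu> \<bind> transition)) = (\<integral>x. (\<integral>y. f y \<partial>transition x) \<partial>\<mu>)"
  proof (rule integral_bind[where B=B and B'=1 and K=borel])
    show "f \<in> borel_measurable borel" by (rule lipschitz_on_UNIV_borel_measurable[OF assms(2)])
    show "transition \<in> measurable \<mu> (subprob_algebra borel)"
      using measurable_cong_sets[OF prob_measuresD(2)[OF assms(1)] refl] measurable_transition
      by blast
    show "AE x in \<mu>. emeasure (transition x) (space (transition x)) \<le> ennreal 1"
      using prob_space.emeasure_space_1[OF prob_measuresD(1)[OF transition_in_prob_measures]]
      by simp
  qed (use B finite_measure_axioms in auto)
  then show ?thesis
    by (simp add: Tq_eq_bind_transition integral_transition[OF assms(2)])
qed

lemma integral_Tq_pow: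
  assumes "\<mu> \<in> prob_measures" "C-lipschitz_on UNIV f"
  shows "(\<integral>y. f y \<partial>(Tq \<tau> q ^^ k) \<mu>) = (\<integral>x. (Tq_dual ^^ k) f x \<partial>\<mu>)"
  using assms(2)
proof (induction k arbitrary: f C)
  case (Suc k)
  have "(Tq \<tau> q ^^ k) \<mu> \<in> prob_measures"
    by (induction k) (simp_all add: assms(1) Tq_in_prob_measures)
  then have "(\<integral>y. f y \<partial>(Tq \<tau> q ^^ Suc k) \<mu>) = (\<integral>x. (Tq_dual ^^ k) (Tq_dual f) x \<partial>\<mu>)"
    using integral_Tq Suc.IH[OF lipschitz_on_Tq_dual[OF Suc.prems]] Suc.prems by simp
  then show ?case by (simp add: funpow_Suc_right del: funpow.simps)
qed simp

end

lemma shift_bounded_imp_convergent: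
  fixes a :: "nat \<Rightarrow> real"
  assumes "\<And>m n. \<bar>a (m + n) - a n\<bar> \<le> e n" "e \<longlonglongrightarrow> 0"
  shows "convergent a"
proof -
  have "Cauchy a"
  proof (rule metric_CauchyI)
    fix \<epsilon> :: real assume "0 < \<epsilon>"
    then obtain N where N: "\<And>n. N \<le> n \<Longrightarrow> \<bar>e n\<bar> < \<epsilon> / 2"
      using LIMSEQ_D[OF assms(2), of "\<epsilon> / 2"] by auto
    show "\<exists>N. \<forall>m\<ge>N. \<forall>n\<ge>N. dist (a m) (a n) < \<epsilon>"
    proof (intro exI allI impI)
      fix m n assume "N \<le> m" "N \<le> n"
      then have "\<bar>a m - a N\<bar> \<le> e N" "\<bar>a n - a N\<bar> \<le> e N"
        using assms(1)[of "m - N" N] assms(1)[of "n - N" N] by simp_all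
      then show "dist (a m) (a n) < \<epsilon>"
        using N[of N] unfolding dist_real_def by linarith
    qed
  qed
  then show ?thesis by (simp add: Cauchy_convergent_iff)
qed

locale mean_contractive_kernel = lipschitz_kernel \<tau> q r t
  for \<tau> :: "'l::metric_space \<Rightarrow> 'a::metric_space \<Rightarrow> 'a" and q r t +
  fixes s :: real and M :: nat
  assumes s_pos: "0 < s" and M_pos: "1 \<le> M"
    and mean_contraction: "\<And>x y f. f \<in> Lip1 \<Longrightarrow>
      P_int \<tau> q M x (\<lambda>ls. ennreal \<bar>f (tau_seq \<tau> ls x) - f (tau_seq \<tau> ls y)\<bar>)
        \<le> ennreal (s * dist x y)"
    and contraction: "s + r * real M * t < 1"
begin

interpretation pair:
  lipschitz_kernel "\<lambda>l p. (\<tau> l (fst p), \<tau> l (snd p))" "\<lambda>p. q (fst p)" "sqrt 2 * r" t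
  by (rule pair_lipschitz_kernel)

lemma abs_pair_Tq_dual_pow_M_fst_snd_le:
  assumes "0 < C" "C-lipschitz_on UNIV g"
  shows "\<bar>(pair.Tq_dual ^^ M) (\<lambda>p. g (fst p)) (x, y) - (pair.Tq_dual ^^ M) (\<lambda>p. g (snd p)) (x, y)\<bar>
    \<le> C * (s * dist x y)"
proof -
  define f where "f z = g z / C" for z
  have g_eq: "g = (\<lambda>z. C * f z)" using assms(1) by (simp add: f_def fun_eq_iff)
  have "f \<in> Lip1" unfolding f_def[abs_def] by (rule divide_lipschitz_in_Lip1[OF assms])
  then have "ennreal \<bar>(pair.Tq_dual ^^ M) (\<lambda>p. f (fst p)) (x, y)
      - (pair.Tq_dual ^^ M) (\<lambda>p. f (snd p)) (x, y)\<bar>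
      \<le> ennreal (s * dist x y)"
    using pair_Tq_dual_pow_fst_snd_le_P_int[of 1 f M x y] mean_contraction[of f x y]
    by (simp add: Lip1_iff_lipschitz_on)
  then have "\<bar>(pair.Tq_dual ^^ M) (\<lambda>p. f (fst p)) (x, y)
      - (pair.Tq_dual ^^ M) (\<lambda>p. f (snd p)) (x, y)\<bar>
      \<le> s * dist x y"
    using s_pos by (simp add: ennreal_le_iff)
  then show ?thesis
    using assms(1) unfolding g_eq pair.Tq_dual_pow_cmult
    by (simp add: right_diff_distrib[symmetric] abs_mult)
qed

lemma lipschitz_on_Tq_dual_pow_M:
  assumes "0 < C" "C-lipschitz_on UNIV h" "0 \<le> L"
    and "\<And>j. j < M \<Longrightarrow> L-lipschitz_on UNIV ((Tq_dual ^^ j) h)"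
  shows "(s * C + r * t * real M * L)-lipschitz_on UNIV ((Tq_dual ^^ M) h)"
  unfolding lipschitz_on_UNIV_real_iff
proof (intro conjI allI)
  show "0 \<le> s * C + r * t * real M * L"
    using s_pos assms(1,3) r_nonneg t_nonneg by simp
  fix x y
  have "\<bar>(Tq_dual ^^ M) h x - (pair.Tq_dual ^^ M) (\<lambda>p. h (snd p)) (x, y)\<bar> \<le> C * (s * dist x y)"
    using abs_pair_Tq_dual_pow_M_fst_snd_le[OF assms(1,2)] by (simp add: pair_Tq_dual_pow_fst)
  moreover have "\<bar>(pair.Tq_dual ^^ M) (\<lambda>p. h (snd p)) (x, y) - (Tq_dual ^^ M) h y\<bar>
      \<le> r * t * dist x y * (\<Sum>j<M. L)"
    by (rule abs_pair_Tq_dual_pow_snd_diff_le[OF assms(2,4)])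
  ultimately show
    "\<bar>(Tq_dual ^^ M) h x - (Tq_dual ^^ M) h y\<bar> \<le> (s * C + r * t * real M * L) * dist x y"
    by (simp add: abs_le_iff algebra_simps)
qed

definition contraction_factor :: real where
  "contraction_factor = s + r * real M * t"

definition growth_factor :: real where
  "growth_factor = (1 + r * t) ^ M"

lemma contraction_factor_pos: "0 < contraction_factor"
  using s_pos r_nonneg t_nonneg by (simp add: contraction_factor_def add_pos_nonneg)

lemma contraction_factor_less_1: "contraction_factor < 1"
  using contraction by (simp add: contraction_factor_def)

lemma growth_factor_ge_1: "1 \<le> growth_factor"
  using r_nonneg t_nonneg by (simp add: growth_factor_def)

lemma lipschitz_on_Tq_dual_pow_decay:
  assumes "0 < C" "C-lipschitz_on UNIV g"
  shows "(growth_factor * contraction_factor ^ (n div M) * C)-lipschitz_on UNIV ((Tq_dual ^^ n) g)"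
  using assms
proof (induction n arbitrary: g C rule: less_induct)
  case (less n)
  show ?case
  proof (cases "n < M")
    case True
    have "C * (1 + r * t) ^ n \<le> growth_factor * contraction_factor ^ (n div M) * C"
      using True less.prems(1) r_nonneg t_nonneg
      by (simp add: growth_factor_def power_increasing)
    then show ?thesis
      using lipschitz_on_Tq_dual_pow[OF less.prems(2)] by (rule lipschitz_on_le[rotated])
  next
    case False
    then obtain m where n: "n = M + m" by (metis le_Suc_ex not_less)
    define h where "h = (Tq_dual ^^ m) g"
    define L where "L = growth_factor * contraction_factor ^ (m div M) * C"
    have L_pos: "0 < L"
      unfolding L_def using growth_factor_ge_1 contraction_factor_pos less.prems(1) by simp
    have "m < n" using n M_pos by simp
    then have h: "L-lipschitz_on UNIV h"
      unfolding h_def L_def by (rule less.IH[OF _ less.prems])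
    have "L-lipschitz_on UNIV ((Tq_dual ^^ j) h)" if "j < M" for j
    proof -
      have "j + m < n" using n that by simp
      then have "(growth_factor * contraction_factor ^ ((j + m) div M) * C)-lipschitz_on UNIV
          ((Tq_dual ^^ (j + m)) g)"
        by (rule less.IH[OF _ less.prems])
      moreover have "growth_factor * contraction_factor ^ ((j + m) div M) * C \<le> L"
        unfolding L_def using growth_factor_ge_1 contraction_factor_pos contraction_factor_less_1
          less.prems(1)
        by (intro mult_right_mono mult_left_mono power_decreasing div_le_mono) auto
      ultimately show ?thesis
        unfolding h_def by (simp add: funpow_add lipschitz_on_le)
    qed
    then have "(s * L + r * t * real M * L)-lipschitz_on UNIV ((Tq_dual ^^ M) h)"
      using lipschitz_on_Tq_dual_pow_M[OF L_pos h] L_pos by simp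
    moreover have "s * L + r * t * real M * L = growth_factor * contraction_factor ^ (n div M) * C"
      using n M_pos by (simp add: L_def contraction_factor_def algebra_simps)
    ultimately show ?thesis by (simp add: h_def n funpow_add)
  qed
qed

definition oscillation_bound :: "real \<Rightarrow> nat \<Rightarrow> real" where
  "oscillation_bound C n =
    growth_factor * contraction_factor ^ (n div M) * C * diameter (UNIV :: 'a set)"

lemma oscillation_bound_nonneg: "0 < C \<Longrightarrow> 0 \<le> oscillation_bound C n"
  using growth_factor_ge_1 contraction_factor_pos
    diameter_ge_0[OF compact_imp_bounded[OF compact_states]]
  by (simp add: oscillation_bound_def)

lemma abs_Tq_dual_pow_shift_le:
  assumes "0 < C" "C-lipschitz_on UNIV g"
  shows "\<bar>(Tq_dual ^^ (m + n)) g x - (Tq_dual ^^ n) g y\<bar> \<le> oscillation_bound C n"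
proof -
  define h where "h = (Tq_dual ^^ n) g"
  have osc: "\<bar>h z - h y\<bar> \<le> oscillation_bound C n" for z
  proof -
    have "\<bar>h z - h y\<bar> \<le> growth_factor * contraction_factor ^ (n div M) * C * dist z y"
      using lipschitz_on_Tq_dual_pow_decay[OF assms] unfolding h_def lipschitz_on_UNIV_real_iff
      by blast
    also have "\<dots> \<le> oscillation_bound C n"
      unfolding oscillation_bound_def
      using growth_factor_ge_1 contraction_factor_pos assms(1)
        diameter_bounded_bound[OF compact_imp_bounded[OF compact_states] UNIV_I UNIV_I]
      by (intro mult_left_mono) auto
    finally show ?thesis .
  qed
  have "h y - oscillation_bound C n \<le> h z" for z using osc[of z] by (simp add: abs_le_iff)
  moreover have "h z \<le> h y + oscillation_bound C n" for z using osc[of z] by (simp add: abs_le_iff)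
  ultimately have "h y - oscillation_bound C n \<le> (Tq_dual ^^ m) h x"
    and "(Tq_dual ^^ m) h x \<le> h y + oscillation_bound C n"
    using Tq_dual_pow_bounds[OF lipschitz_on_Tq_dual_pow[OF assms(2)]] unfolding h_def by blast+
  then show ?thesis by (simp add: h_def funpow_add abs_le_iff)
qed

definition decay_rate :: real where
  "decay_rate = root M contraction_factor"

lemma decay_rate_pos: "0 < decay_rate"
  and decay_rate_less_1: "decay_rate < 1"
  using contraction_factor_pos contraction_factor_less_1 M_pos
  by (auto simp: decay_rate_def real_root_lt_1_iff)

lemma oscillation_bound_le:
  assumes "0 < C"
  shows "oscillation_bound C n
    \<le> growth_factor * C * diameter (UNIV :: 'a set) / decay_rate ^ M * decay_rate ^ n"
proof -
  have "decay_rate ^ M = contraction_factor"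
    using contraction_factor_pos M_pos by (simp add: decay_rate_def real_root_pow_pos2)
  then have "contraction_factor ^ (n div M) * decay_rate ^ M = decay_rate ^ (M * (n div M) + M)"
    by (simp add: power_mult power_add)
  also have "\<dots> \<le> decay_rate ^ n"
  proof (rule power_decreasing)
    show "n \<le> M * (n div M) + M"
      using mod_less_divisor[of M n] M_pos mult_div_mod_eq[of M n] by linarith
  qed (use decay_rate_pos decay_rate_less_1 in auto)
  finally have "contraction_factor ^ (n div M) \<le> decay_rate ^ n / decay_rate ^ M"
    using decay_rate_pos by (simp add: pos_le_divide_eq)
  moreover have "0 \<le> growth_factor * C * diameter (UNIV :: 'a set)"
    using growth_factor_ge_1 assms diameter_ge_0[OF compact_imp_bounded[OF compact_states]]
    by simp
  ultimately have "growth_factor * C * diameter (UNIV :: 'a set) * contraction_factor ^ (n div M)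
      \<le> growth_factor * C * diameter (UNIV :: 'a set) * (decay_rate ^ n / decay_rate ^ M)"
    by (rule mult_left_mono)
  then show ?thesis by (simp add: oscillation_bound_def ac_simps)
qed

lemma oscillation_bound_tendsto_0: "0 < C \<Longrightarrow> oscillation_bound C \<longlonglongrightarrow> 0"
proof (rule Lim_null_comparison)
  assume "0 < C"
  show "\<forall>\<^sub>F n in sequentially. norm (oscillation_bound C n)
      \<le> growth_factor * C * diameter (UNIV :: 'a set) / decay_rate ^ M * decay_rate ^ n"
    using oscillation_bound_le[OF \<open>0 < C\<close>] oscillation_bound_nonneg[OF \<open>0 < C\<close>]
    by (intro always_eventually allI) simp
  show "(\<lambda>n. growth_factor * C * diameter (UNIV :: 'a set) / decay_rate ^ M * decay_rate ^ n)
      \<longlonglongrightarrow> 0"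
    using decay_rate_pos decay_rate_less_1
    by (intro tendsto_mult_right_zero LIMSEQ_power_zero) simp
qed

definition limit_functional :: "('a \<Rightarrow> real) \<Rightarrow> real" where
  "limit_functional g = lim (\<lambda>n. (Tq_dual ^^ n) g undefined)"

lemma abs_Tq_dual_pow_minus_limit_le:
  assumes "0 < C" "C-lipschitz_on UNIV g"
  shows "\<bar>(Tq_dual ^^ n) g x - limit_functional g\<bar> \<le> oscillation_bound C n"
proof -
  have "convergent (\<lambda>n. (Tq_dual ^^ n) g undefined)"
    using abs_Tq_dual_pow_shift_le[OF assms] oscillation_bound_tendsto_0[OF assms(1)]
    by (rule shift_bounded_imp_convergent)
  then have "(\<lambda>m. (Tq_dual ^^ (m + n)) g undefined) \<longlonglongrightarrow> limit_functional g"
    unfolding limit_functional_def convergent_LIMSEQ_iff by (rule LIMSEQ_ignore_initial_segment)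
  then have "(\<lambda>m. \<bar>(Tq_dual ^^ (m + n)) g undefined - (Tq_dual ^^ n) g x\<bar>)
      \<longlonglongrightarrow> \<bar>limit_functional g - (Tq_dual ^^ n) g x\<bar>"
    by (intro tendsto_rabs tendsto_diff tendsto_const)
  then have "\<bar>limit_functional g - (Tq_dual ^^ n) g x\<bar> \<le> oscillation_bound C n"
    by (rule LIMSEQ_le_const2) (use abs_Tq_dual_pow_shift_le[OF assms] in blast)
  then show ?thesis by (simp add: abs_minus_commute)
qed

lemma Tq_dual_pow_tendsto_limit_functional:
  assumes "lipschitz g"
  shows "(\<lambda>n. (Tq_dual ^^ n) g x) \<longlonglongrightarrow> limit_functional g"
proof -
  obtain C where C: "0 < C" "C-lipschitz_on UNIV g" using assms by (rule lipschitzE)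
  have "\<forall>n. norm ((Tq_dual ^^ n) g x - limit_functional g) \<le> oscillation_bound C n"
    using abs_Tq_dual_pow_minus_limit_le[OF C] by simp
  then have "(\<lambda>n. (Tq_dual ^^ n) g x - limit_functional g) \<longlonglongrightarrow> 0"
    by (intro Lim_null_comparison[OF always_eventually oscillation_bound_tendsto_0[OF C(1)]])
  then show ?thesis by (simp add: LIM_zero_iff)
qed

lemma positive_lipschitz_functional_limit: "positive_lipschitz_functional limit_functional"
proof
  fix f g :: "'a \<Rightarrow> real" and c :: real
  assume f: "lipschitz f"
  obtain C where C: "C-lipschitz_on UNIV f" using f unfolding lipschitz_def by blast
  note lim_f = Tq_dual_pow_tendsto_limit_functional[OF f, of undefined]
  show "limit_functional (\<lambda>x. c * f x) = c * limit_functional f"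
    using Tq_dual_pow_tendsto_limit_functional[OF lipschitz_cmult[OF f], of c undefined]
      tendsto_mult_left[OF lim_f, of c]
    by (simp add: Tq_dual_pow_cmult LIMSEQ_unique)
  assume g: "lipschitz g"
  obtain D where D: "D-lipschitz_on UNIV g" using g unfolding lipschitz_def by blast
  note lim_g = Tq_dual_pow_tendsto_limit_functional[OF g, of undefined]
  show "limit_functional (\<lambda>x. f x + g x) = limit_functional f + limit_functional g"
    using Tq_dual_pow_tendsto_limit_functional[OF lipschitz_add[OF f g], of undefined]
      tendsto_add[OF lim_f lim_g]
    by (simp add: Tq_dual_pow_add[OF C D] LIMSEQ_unique)
  show "limit_functional f \<le> limit_functional g" if "\<And>x. f x \<le> g x"
    using Tq_dual_pow_mono[OF C D that] by (intro LIMSEQ_le[OF lim_f lim_g]) auto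
next
  show "limit_functional (\<lambda>x. 1) = 1"
    using Tq_dual_pow_tendsto_limit_functional[OF lipschitz_const, of 1 undefined]
    by (simp add: Tq_dual_pow_const LIMSEQ_const_iff)
qed (rule compact_states)

lemma limit_functional_Tq_dual:
  assumes "C-lipschitz_on UNIV f"
  shows "limit_functional (Tq_dual f) = limit_functional f"
proof -
  have "(\<lambda>n. (Tq_dual ^^ Suc n) f undefined) \<longlonglongrightarrow> limit_functional f"
    using Tq_dual_pow_tendsto_limit_functional[OF lipschitzI[OF assms]] by (rule LIMSEQ_Suc)
  moreover have "(\<lambda>n. (Tq_dual ^^ n) (Tq_dual f) undefined) \<longlonglongrightarrow> limit_functional (Tq_dual f)"
    by (rule Tq_dual_pow_tendsto_limit_functional[OF lipschitzI[OF lipschitz_on_Tq_dual[OF assms]]])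
  ultimately show ?thesis by (simp add: funpow_Suc_right LIMSEQ_unique del: funpow.simps)
qed

lemma abs_integral_Tq_pow_minus_limit_le:
  assumes "\<mu> \<in> prob_measures" "0 < C" "C-lipschitz_on UNIV f"
  shows "\<bar>(\<integral>y. f y \<partial>(Tq \<tau> q ^^ n) \<mu>) - limit_functional f\<bar> \<le> oscillation_bound C n"
  unfolding integral_Tq_pow[OF assms(1,3)]
  using abs_Tq_dual_pow_minus_limit_le[OF assms(2,3)]
  by (intro prob_space.abs_integral_diff_const_le[OF prob_measuresD(1)[OF assms(1)]]
      integrable_lipschitz[OF compact_states assms(1)
        lipschitzI[OF lipschitz_on_Tq_dual_pow[OF assms(3)]]])

lemma invariant_measure_eqI:
  assumes "\<mu> \<in> prob_measures" "Tq \<tau> q \<mu> = \<mu>" "\<nu> \<in> prob_measures"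
    and "\<And>f. lipschitz f \<Longrightarrow> (\<integral>x. f x \<partial>\<nu>) = limit_functional f"
  shows "\<mu> = \<nu>"
proof (rule prob_measures_eqI_lipschitz[OF assms(1,3)])
  fix f :: "'a \<Rightarrow> real" assume f: "lipschitz f"
  then obtain C where C: "0 < C" "C-lipschitz_on UNIV f" by (rule lipschitzE)
  have "(Tq \<tau> q ^^ n) \<mu> = \<mu>" for n by (induction n) (simp_all add: assms(2))
  then have "\<bar>(\<integral>x. f x \<partial>\<mu>) - limit_functional f\<bar> \<le> oscillation_bound C n" for n
    using abs_integral_Tq_pow_minus_limit_le[OF assms(1) C, of n] by simp
  then have "\<bar>(\<integral>x. f x \<partial>\<mu>) - limit_functional f\<bar> \<le> 0"
    by (intro LIMSEQ_le_const[OF oscillation_bound_tendsto_0[OF C(1)]]) blast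
  then show "(\<integral>x. f x \<partial>\<mu>) = (\<integral>x. f x \<partial>\<nu>)" using assms(4)[OF f] by simp
qed

lemma invariant_measure_exists:
  obtains \<mu> where "\<mu> \<in> prob_measures" "Tq \<tau> q \<mu> = \<mu>"
    and "\<And>f. lipschitz f \<Longrightarrow> (\<integral>x. f x \<partial>\<mu>) = limit_functional f"
proof -
  obtain \<mu> where \<mu>: "\<mu> \<in> prob_measures" "\<And>f. lipschitz f \<Longrightarrow> (\<integral>x. f x \<partial>\<mu>) = limit_functional f"
    using positive_lipschitz_functional.lipschitz_functional_representation[OF
        positive_lipschitz_functional_limit] by blast
  have "Tq \<tau> q \<mu> = \<mu>"
  proof (rule prob_measures_eqI_lipschitz[OF Tq_in_prob_measures[OF \<mu>(1)] \<mu>(1)])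
    fix f :: "'a \<Rightarrow> real" assume "lipschitz f"
    then obtain C where C: "C-lipschitz_on UNIV f" unfolding lipschitz_def by blast
    have "(\<integral>y. f y \<partial>Tq \<tau> q \<mu>) = limit_functional (Tq_dual f)"
      using integral_Tq[OF \<mu>(1) C] \<mu>(2)[OF lipschitzI[OF lipschitz_on_Tq_dual[OF C]]] by simp
    also have "\<dots> = (\<integral>x. f x \<partial>\<mu>)"
      using limit_functional_Tq_dual[OF C] \<mu>(2)[OF lipschitzI[OF C]] by simp
    finally show "(\<integral>y. f y \<partial>Tq \<tau> q \<mu>) = (\<integral>x. f x \<partial>\<mu>)" .
  qed
  with \<mu> that show thesis by blast
qed

lemma dMK_Tq_pow_le:
  assumes "\<mu>0 \<in> prob_measures" "\<mu> \<in> prob_measures"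
    and "\<And>f. lipschitz f \<Longrightarrow> (\<integral>x. f x \<partial>\<mu>) = limit_functional f"
  shows "dMK ((Tq \<tau> q ^^ k) \<mu>0) \<mu>
    \<le> growth_factor * diameter (UNIV :: 'a set) / decay_rate ^ M * decay_rate ^ k"
proof (rule dMK_leI)
  fix f :: "'a \<Rightarrow> real" assume f: "1-lipschitz_on UNIV f"
  have "(\<integral>y. f y \<partial>(Tq \<tau> q ^^ k) \<mu>0) - (\<integral>y. f y \<partial>\<mu>) \<le> oscillation_bound 1 k"
    using abs_integral_Tq_pow_minus_limit_le[OF assms(1) _ f] assms(3)[OF lipschitzI[OF f]]
    by (simp add: abs_le_iff)
  also have "\<dots> \<le> growth_factor * diameter (UNIV :: 'a set) / decay_rate ^ M * decay_rate ^ k"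
    using oscillation_bound_le[of 1 k] by simp
  finally show "(\<integral>y. f y \<partial>(Tq \<tau> q ^^ k) \<mu>0) - (\<integral>y. f y \<partial>\<mu>)
      \<le> growth_factor * diameter (UNIV :: 'a set) / decay_rate ^ M * decay_rate ^ k" .
qed

end

theorem mainTheorem12:
  fixes \<tau> :: "'l::metric_space \<Rightarrow> 'a::metric_space \<Rightarrow> 'a"
    and q :: "'a \<Rightarrow> 'l measure"
    and s r t :: real and M :: nat
  assumes X_compact: "compact (UNIV :: 'a set)"
    and L_compact: "compact (UNIV :: 'l set)"
    and tau_cont: "continuous_on UNIV (\<lambda>(l, x). \<tau> l x)"
    and q_prob: "\<And>x. q x \<in> prob_measures"
    and q_cont: "\<And>x. ((\<lambda>y. dMK (q y) (q x)) \<longlongrightarrow> 0) (at x)"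
    and W1: "\<And>l x y. dist (\<tau> l x) (\<tau> l y) \<le> dist x y"
    and MP1_s: "s > 0" and MP1_M: "M \<ge> 1"
    and MP1: "\<And>x y f. f \<in> Lip1 \<Longrightarrow>
               P_int \<tau> q M x (\<lambda>ls. ennreal \<bar>f (tau_seq \<tau> ls x) - f (tau_seq \<tau> ls y)\<bar>)
                 \<le> ennreal (s * dist x y)"
    and H2_r: "r \<ge> 0"
    and H2: "\<And>l1 l2 x. dist (\<tau> l1 x) (\<tau> l2 x) \<le> r * dist l1 l2"
    and H3_t: "t \<ge> 0"
    and H3: "\<And>x y. dMK (q x) (q y) \<le> t * dist x y"
    and contr: "s + r * real M * t < 1"
  shows "(\<exists>!\<mu>. \<mu> \<in> prob_measures \<and> Tq \<tau> q \<mu> = \<mu>) \<and>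
         (\<exists>\<mu>R. \<mu>R \<in> prob_measures \<and> Tq \<tau> q \<mu>R = \<mu>R \<and>
           (\<forall>\<mu>0 \<in> prob_measures. \<exists>C c. C \<ge> 0 \<and> 0 \<le> c \<and> c < 1 \<and>
              (\<forall>k. dMK ((Tq \<tau> q ^^ k) \<mu>0) \<mu>R \<le> C * c ^ k)))"
proof -
  interpret mean_contractive_kernel \<tau> q r t s M
    by (unfold_locales; fact)
  obtain \<mu>R where \<mu>R: "\<mu>R \<in> prob_measures" "Tq \<tau> q \<mu>R = \<mu>R"
    and char: "\<And>f. lipschitz f \<Longrightarrow> (\<integral>x. f x \<partial>\<mu>R) = limit_functional f"
    using invariant_measure_exists by blast
  have unique: "\<mu> = \<mu>R" if "\<mu> \<in> prob_measures" "Tq \<tau> q \<mu> = \<mu>" for \<mu>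
    using invariant_measure_eqI[OF that \<mu>R(1) char] .
  define C where "C = growth_factor * diameter (UNIV :: 'a set) / decay_rate ^ M"
  have "0 \<le> C"
    using growth_factor_ge_1 decay_rate_pos diameter_ge_0[OF compact_imp_bounded[OF X_compact]]
    by (simp add: C_def)
  then have "\<exists>C c. C \<ge> 0 \<and> 0 \<le> c \<and> c < 1 \<and> (\<forall>k. dMK ((Tq \<tau> q ^^ k) \<mu>0) \<mu>R \<le> C * c ^ k)"
    if "\<mu>0 \<in> prob_measures" for \<mu>0
    using dMK_Tq_pow_le[OF that \<mu>R(1) char] decay_rate_pos decay_rate_less_1
    unfolding C_def by (intro exI[of _ C] exI[of _ decay_rate]) (simp add: C_def less_imp_le)
  with \<mu>R unique show ?thesis by blast
qed

end
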